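(* Let $\mathbb H=\mathbb H(\mathfrak t,W_{\mathcal L},c\mathbf r,\natural)$ be the algebra described below. Then $S(\mathfrak t^* )^{W_{\mathcal L}}\otimes\mathbb C[\mathbf r]$ is a central subalgebra of $\mathbb H$. If $W_{\mathcal L}$ acts faithfully on $\mathfrak t$, then $S(\mathfrak t^* )^{W_{\mathcal L}}\otimes\mathbb C[\mathbf r]$ equals the centre of $\mathbb H$.
   Context: Let $G$ be a complex reductive algebraic group, possibly disconnected, with identity component $G^\circ$ and Lie algebra $\mathfrak g$. Let $P=LU$ be a parabolic subgroup of $G^\circ$ with Levi factor $L$, let $v\in\mathrm{Lie}(L)$ be nilpotent with adjoint orbit $\mathcal C_v^L$, and let $\mathcal L$ be an irreducible $L$-equivariant cuspidal local system on $\mathcal C_v^L$. Put $T=Z(L)^\circ$, $\mathfrak t=\mathrm{Lie}(T)$. Let $N_G(\mathcal L)$ be the stabilizer of $\mathcal L$ in $N_G(L)$, $N_G(P,\mathcal L)$ the stabilizer of $(P,L,\mathcal L)$; $W_{\mathcal L}=N_G(\mathcal L)/L$, $W^\circ_{\mathcal L}=N_{G^\circ}(L)/L$ (the Weyl group of the root system $R(G^\circ,T)$ of nonzero weights of $T$ on $\mathfrak g$), $\mathcal R_{\mathcal L}=N_G(P,\mathcal L)/L$, so $W_{\mathcal L}=W^\circ_{\mathcal L}\rtimes\mathcal R_{\mathcal L}$. Let $\alpha_i$ ($i\in I$) be the simple roots with respect to $P$ and $s_i$ their reflections; let $c_i\in\mathbb C$ with $c_i=c_j$ when $s_i,s_j$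 are $W_{\mathcal L}$-conjugate, and $\natural$ a 2-cocycle on $W_{\mathcal L}/W^\circ_{\mathcal L}$. $\mathbb H(\mathfrak t,W_{\mathcal L},c\mathbf r,\natural)$ is the unique associative algebra on $\mathbb C[W_{\mathcal L},\natural]\otimes S(\mathfrak t^* )\otimes\mathbb C[\mathbf r]$ ($\mathbf r$ an indeterminate, $N_w$ the standard basis of the twisted group algebra) in which $\mathbb C[W_{\mathcal L},\natural]$ and $S(\mathfrak t^* )\otimes\mathbb C[\mathbf r]$ are subalgebras, $\mathbf r$ is central, $N_{s_i}\xi-{}^{s_i}\xi N_{s_i}=c_i\mathbf r(\xi-{}^{s_i}\xi)/\alpha_i$ for $\xi\in S(\mathfrak t^* )$, and $N_w\xi N_w^{-1}={}^w\xi$ for $w\in\mathcal R_{\mathcal L}$. *)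

theory Defs
  imports Complex_Main "HOL-Algebra.Generated_Groups" "HOL-Algebra.Coset"
begin

text \<open>The torus Lie algebra t is modelled as complex^n, i.e. functions 'n => complex
  for a finite index type 'n.  Linear functionals on t are given by coefficient vectors,
  linear endomorphisms by matrices.\<close>

definition lin :: "('n::finite \<Rightarrow> complex) \<Rightarrow> ('n \<Rightarrow> complex) \<Rightarrow> complex" where
  "lin a x = (\<Sum>j\<in>UNIV. a j * x j)"

definition mv :: "('n::finite \<Rightarrow> 'n \<Rightarrow> complex) \<Rightarrow> ('n \<Rightarrow> complex) \<Rightarrow> ('n \<Rightarrow> complex)" where
  "mv M x = (\<lambda>i. \<Sum>j\<in>UNIV. M i j * x j)"

definition mmul :: "('n::finite \<Rightarrow> 'n \<Rightarrow> complex) \<Rightarrow> ('n \<Rightarrow> 'n \<Rightarrow> complex) \<Rightarrow> ('n \<Rightarrow> 'n \<Rightarrow> complex)" where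
  "mmul M N = (\<lambda>i k. \<Sum>j\<in>UNIV. M i j * N j k)"

definition idm :: "'n \<Rightarrow> 'n \<Rightarrow> complex" where
  "idm = (\<lambda>i j. if i = j then 1 else 0)"

text \<open>S(t^*): polynomial functions on t (C is infinite, so this is the symmetric algebra).\<close>
inductive_set tpoly :: "(('n::finite \<Rightarrow> complex) \<Rightarrow> complex) set" where
  tconst: "(\<lambda>x. c) \<in> tpoly"
| tcoord: "(\<lambda>x. x j) \<in> tpoly"
| tadd: "f \<in> tpoly \<Longrightarrow> g \<in> tpoly \<Longrightarrow> (\<lambda>x. f x + g x) \<in> tpoly"
| tmult: "f \<in> tpoly \<Longrightarrow> g \<in> tpoly \<Longrightarrow> (\<lambda>x. f x * g x) \<in> tpoly"

text \<open>S(t^*) \<otimes> C[r]: polynomial functions on t \<times> C, the last variable being r.\<close>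
inductive_set rpoly :: "(('n::finite \<Rightarrow> complex) \<Rightarrow> complex \<Rightarrow> complex) set" where
  rconst: "(\<lambda>x r. c) \<in> rpoly"
| rcoord: "(\<lambda>x r. x j) \<in> rpoly"
| rvar: "(\<lambda>x r. r) \<in> rpoly"
| radd: "f \<in> rpoly \<Longrightarrow> g \<in> rpoly \<Longrightarrow> (\<lambda>x r. f x r + g x r) \<in> rpoly"
| rmult: "f \<in> rpoly \<Longrightarrow> g \<in> rpoly \<Longrightarrow> (\<lambda>x r. f x r * g x r) \<in> rpoly"

text \<open>Action of w on functions: (w \<xi>)(x) = \<xi>(w^{-1} x); here M is the matrix of w^{-1}.\<close>
definition tact :: "('n::finite \<Rightarrow> 'n \<Rightarrow> complex) \<Rightarrow> (('n \<Rightarrow> complex) \<Rightarrow> complex) \<Rightarrow> (('n \<Rightarrow> complex) \<Rightarrow> complex)" where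
  "tact M f = (\<lambda>x. f (mv M x))"

definition ract :: "('n::finite \<Rightarrow> 'n \<Rightarrow> complex) \<Rightarrow> (('n \<Rightarrow> complex) \<Rightarrow> complex \<Rightarrow> complex) \<Rightarrow> (('n \<Rightarrow> complex) \<Rightarrow> complex \<Rightarrow> complex)" where
  "ract M f = (\<lambda>x r. f (mv M x) r)"

definition funct_act :: "('n::finite \<Rightarrow> 'n \<Rightarrow> complex) \<Rightarrow> ('n \<Rightarrow> complex) \<Rightarrow> ('n \<Rightarrow> complex)" where
  "funct_act M a = (\<lambda>j. \<Sum>i\<in>UNIV. a i * M i j)"

definition divdiff :: "('n::finite \<Rightarrow> complex) \<Rightarrow> (('n \<Rightarrow> complex) \<Rightarrow> complex) \<Rightarrow> (('n \<Rightarrow> complex) \<Rightarrow> complex) \<Rightarrow> (('n \<Rightarrow> complex) \<Rightarrow> complex)" where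
  "divdiff a f g = (THE h. h \<in> tpoly \<and> (\<forall>x. lin a x * h x = f x - g x))"

definition inv_rpoly :: "('w, 'b) monoid_scheme \<Rightarrow> ('w \<Rightarrow> 'n::finite \<Rightarrow> 'n \<Rightarrow> complex)
    \<Rightarrow> (('n \<Rightarrow> complex) \<Rightarrow> complex \<Rightarrow> complex) set" where
  "inv_rpoly W \<rho> = {f \<in> rpoly. \<forall>w\<in>carrier W. ract (\<rho> (inv\<^bsub>W\<^esub> w)) f = f}"

definition centre :: "'h::ring_1 set" where
  "centre = {z. \<forall>h. z * h = h * z}"

text \<open>H (a complex algebra, given as a ring 'h with complex scalars \<iota>(const c)) is the
 graded Hecke algebra H(t, W, c r, \<natural>): iota embeds S(t^*) \<otimes> C[r], N w is the standard
 basis of the twisted group algebra C[W,\<natural>], H = C[W,\<natural>] \<otimes> S(t^*) \<otimes> C[r] as vector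
 spaces (multiplication map), r central, and the cross relations hold.\<close>
definition is_graded_hecke ::
  "('w, 'b) monoid_scheme \<Rightarrow> ('w \<Rightarrow> 'n::finite \<Rightarrow> 'n \<Rightarrow> complex) \<Rightarrow> 'w set \<Rightarrow> 'i set
   \<Rightarrow> ('i \<Rightarrow> 'n \<Rightarrow> complex) \<Rightarrow> ('i \<Rightarrow> 'w) \<Rightarrow> ('i \<Rightarrow> complex) \<Rightarrow> ('w \<Rightarrow> 'w \<Rightarrow> complex)
   \<Rightarrow> ((('n \<Rightarrow> complex) \<Rightarrow> complex \<Rightarrow> complex) \<Rightarrow> 'h::ring_1) \<Rightarrow> ('w \<Rightarrow> 'h) \<Rightarrow> bool" where
  "is_graded_hecke W \<rho> R I \<alpha> s c cocyc \<iota> N \<longleftrightarrow>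
     \<comment> \<open>S(t^*) \<otimes> C[r] is a subalgebra\<close>
     (\<forall>f\<in>rpoly. \<forall>g\<in>rpoly. \<iota> (\<lambda>x r. f x r + g x r) = \<iota> f + \<iota> g) \<and>
     (\<forall>f\<in>rpoly. \<forall>g\<in>rpoly. \<iota> (\<lambda>x r. f x r * g x r) = \<iota> f * \<iota> g) \<and>
     \<iota> (\<lambda>x r. 1) = 1 \<and>
     \<comment> \<open>complex scalars are central (H is a C-algebra) and r is central\<close>
     (\<forall>a h. \<iota> (\<lambda>x r. a) * h = h * \<iota> (\<lambda>x r. a)) \<and>
     (\<forall>h. \<iota> (\<lambda>x r. r) * h = h * \<iota> (\<lambda>x r. r)) \<and>
     \<comment> \<open>C[W,\<natural>] is a subalgebra with standard basis N\<close>
     N \<one>\<^bsub>W\<^esub> = 1 \<and>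
     (\<forall>w\<in>carrier W. \<forall>v\<in>carrier W. N w * N v = \<iota> (\<lambda>x r. cocyc w v) * N (w \<otimes>\<^bsub>W\<^esub> v)) \<and>
     \<comment> \<open>H = C[W,\<natural>] \<otimes> S(t^*) \<otimes> C[r] as vector spaces\<close>
     (\<forall>h. \<exists>!F. (\<forall>w. w \<notin> carrier W \<longrightarrow> F w = (\<lambda>x r. 0)) \<and> (\<forall>w\<in>carrier W. F w \<in> rpoly) \<and>
              h = (\<Sum>w\<in>carrier W. N w * \<iota> (F w))) \<and>
     \<comment> \<open>N_{s_i} \<xi> - s_i(\<xi>) N_{s_i} = c_i r (\<xi> - s_i(\<xi>))/\<alpha>_i for \<xi> in S(t^*)\<close>
     (\<forall>i\<in>I. \<forall>f\<in>tpoly.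
        N (s i) * \<iota> (\<lambda>x r. f x) - \<iota> (\<lambda>x r. tact (\<rho> (inv\<^bsub>W\<^esub> (s i))) f x) * N (s i)
        = \<iota> (\<lambda>x r. c i * r * divdiff (\<alpha> i) f (tact (\<rho> (inv\<^bsub>W\<^esub> (s i))) f) x)) \<and>
     \<comment> \<open>N_w \<xi> N_w^{-1} = w(\<xi>) for w in R, written as N_w \<xi> = w(\<xi>) N_w\<close>
     (\<forall>w\<in>R. \<forall>f\<in>tpoly.
        N w * \<iota> (\<lambda>x r. f x) = \<iota> (\<lambda>x r. tact (\<rho> (inv\<^bsub>W\<^esub> w)) f x) * N w)"

end

theory Submission
  imports Defs "HOL-Computational_Algebra.Polynomial" "HOL-Algebra.Multiplicative_Group"
    "HOL-Library.Function_Algebras"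
begin

text \<open>
  Invariant polynomials commute with every \<open>N\<^sub>w\<close>: for a simple reflection the cross relation
  gives \<open>N\<^sub>s f - f N\<^sub>s = c r (f - s f)/\<alpha> = 0\<close>, for \<open>w \<in> R\<close> the defining relation gives
  \<open>N\<^sub>w f = (w f) N\<^sub>w = f N\<^sub>w\<close>, and these elements generate \<open>W\<close>.

  Conversely, write a central \<open>z\<close> as \<open>\<Sum>\<^sub>w N\<^sub>w F\<^sub>w\<close>. Moving a linear form \<open>\<xi>\<close> past \<open>N\<^sub>w\<close>
  produces \<open>N\<^sub>w (w\<^sup>-\<^sup>1\<xi>)\<close> plus a combination of the \<open>N\<^sub>v\<close> with coefficients in \<open>\<complex>[r]\<close> alone,
  so comparing coefficients in \<open>\<xi> z = z \<xi>\<close> gives \<open>(w\<^sup>-\<^sup>1\<xi> - \<xi>) F\<^sub>w + \<Sum>\<^sub>v g\<^sub>v F\<^sub>v = 0\<close> with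
  \<open>g\<^sub>v\<close> constant on \<open>t\<close>. Restricted to the line through \<open>0\<close> and a point fixed by no \<open>w \<noteq> 1\<close>
  (faithfulness), the first term has higher degree than the others when \<open>F\<^sub>w\<close> has maximal degree,
  so every \<open>F\<^sub>w\<close> with \<open>w \<noteq> 1\<close> vanishes at all such points, which are Zariski dense. Thus \<open>z = F\<^sub>1\<close>, and comparing coefficients in
  \<open>F\<^sub>1 N\<^sub>w = N\<^sub>w F\<^sub>1\<close> shows that \<open>F\<^sub>1\<close> is invariant.
\<close>

section \<open>Polynomial functions on \<open>t\<close> and \<open>t \<times> \<complex>\<close>\<close>

definition line :: "('n::finite \<Rightarrow> complex) \<Rightarrow> ('n \<Rightarrow> complex) \<Rightarrow> complex \<Rightarrow> ('n \<Rightarrow> complex)" where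
  "line x v t = (\<lambda>j. x j + t * v j)"

definition poly_on_lines :: "(('n::finite \<Rightarrow> complex) \<Rightarrow> complex) \<Rightarrow> bool" where
  "poly_on_lines g \<longleftrightarrow> (\<forall>x v. \<exists>p. \<forall>t. g (line x v t) = poly p t)"

lemma lin_line: "lin a (line x v t) = lin a x + t * lin a v"
  by (simp add: lin_def line_def distrib_left sum.distrib sum_distrib_left mult.left_commute)

lemma mv_line: "mv M (line x v t) = line (mv M x) (mv M v) t"
  by (simp add: mv_def line_def distrib_left sum.distrib sum_distrib_left mult.left_commute)

lemma mv_mmul: "mv (mmul A B) x = mv A (mv B x)"
proof
  fix i
  have "(\<Sum>k\<in>UNIV. (\<Sum>j\<in>UNIV. A i j * B j k) * x k) = (\<Sum>j\<in>UNIV. A i j * (\<Sum>k\<in>UNIV. B j k * x k))"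
    by (simp add: sum_distrib_left sum_distrib_right mult.assoc) (rule sum.swap)
  then show "mv (mmul A B) x i = mv A (mv B x) i" by (simp add: mv_def mmul_def)
qed

lemma mv_idm: "mv idm x = x"
proof
  fix i
  have "(\<Sum>j\<in>UNIV. (if i = j then 1 else 0) * x j) = (\<Sum>j\<in>UNIV. if i = j then x j else 0)"
    by (rule sum.cong) auto
  then show "mv idm x i = x i" by (simp add: mv_def idm_def)
qed

lemma mv_eq_idm:
  fixes M :: "'n::finite \<Rightarrow> 'n \<Rightarrow> complex"
  assumes "\<forall>x. mv M x = x" shows "M = idm"
proof (intro ext)
  fix i k :: 'n
  define e where "e = (\<lambda>j::'n. if j = k then (1::complex) else 0)"
  have "mv M e i = M i k" by (simp add: mv_def e_def if_distrib cong: if_cong)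
  then show "M i k = idm i k" using assms by (simp add: e_def idm_def)
qed

lemma lin_mv: "lin a (mv M x) = lin (funct_act M a) x"
proof -
  have "(\<Sum>i\<in>UNIV. a i * (\<Sum>j\<in>UNIV. M i j * x j)) = (\<Sum>j\<in>UNIV. (\<Sum>i\<in>UNIV. a i * M i j) * x j)"
    by (simp add: sum_distrib_left sum_distrib_right mult.assoc) (rule sum.swap)
  then show ?thesis by (simp add: lin_def mv_def funct_act_def)
qed

lemma lin_indicator: "lin (\<lambda>k. if k = j then 1 else 0) v = v j"
proof -
  have "(\<Sum>k\<in>UNIV. (if k = j then 1 else 0) * v k) = (\<Sum>k\<in>UNIV. if k = j then v k else 0)"
    by (rule sum.cong) auto
  then show ?thesis by (simp add: lin_def)
qed

lemma lin_diff_smult: "lin a (\<lambda>j. y j - k * h j) = lin a y - k * lin a h"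
  by (simp add: lin_def right_diff_distrib sum_subtractf sum_distrib_left mult.left_commute)

lemma rpoly_poly_on_lines:
  assumes "f \<in> rpoly" shows "poly_on_lines (\<lambda>x. f x r)"
  unfolding poly_on_lines_def
proof (intro allI)
  fix x v
  show "\<exists>p. \<forall>t. f (line x v t) r = poly p t"
    using assms
  proof induction
    case (rconst c) show ?case by (rule exI[of _ "[:c:]"]) simp
  next
    case (rcoord j) show ?case by (rule exI[of _ "[:x j, v j:]"]) (simp add: line_def)
  next
    case rvar show ?case by (rule exI[of _ "[:r:]"]) simp
  next
    case (radd f g)
    then obtain p q where "\<forall>t. f (line x v t) r = poly p t" "\<forall>t. g (line x v t) r = poly q t" by blast
    then show ?case by (intro exI[of _ "p + q"]) simp
  next
    case (rmult f g)
    then obtain p q where "\<forall>t. f (line x v t) r = poly p t" "\<forall>t. g (line x v t) r = poly q t" by blast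
    then show ?case by (intro exI[of _ "p * q"]) simp
  qed
qed

lemma poly_on_lines_mv_coord: "poly_on_lines (\<lambda>y. mv M y j - y j)"
  unfolding poly_on_lines_def
proof (intro allI)
  fix x v
  show "\<exists>p. \<forall>t. mv M (line x v t) j - line x v t j = poly p t"
    by (rule exI[of _ "[:mv M x j - x j, mv M v j - v j:]"])
      (simp only: mv_line, simp add: line_def algebra_simps)
qed

lemma complex_poly_eq_0_if_cofinite_roots:
  fixes p :: "complex poly"
  assumes "\<forall>t. t \<noteq> t0 \<longrightarrow> poly p t = 0" shows "p = 0"
proof (rule ccontr)
  assume "p \<noteq> 0"
  then have "finite {t. poly p t = 0}" by (rule poly_roots_finite)
  then have "finite (insert t0 {t. poly p t = 0})" by simp
  moreover have "insert t0 {t. poly p t = 0} = UNIV" using assms by auto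
  ultimately show False using infinite_UNIV_char_0 by metis
qed

lemma rpoly_eq_0_if_lin_mult_eq_0:
  assumes a: "a \<noteq> (\<lambda>j. 0)" and h: "h \<in> rpoly" and z: "\<forall>x r. lin a x * h x r = 0"
  shows "h = 0"
proof (intro ext)
  fix x r
  obtain j where j: "a j \<noteq> 0" using a by auto
  define v where "v = (\<lambda>k. if k = j then (1::complex) else 0)"
  have lv: "lin a v = a j" by (simp add: lin_def v_def if_distrib cong: if_cong)
  obtain p where p: "\<forall>t. h (line x v t) r = poly p t"
    using rpoly_poly_on_lines[OF h] unfolding poly_on_lines_def by blast
  have "poly p t = 0" if "t \<noteq> - lin a x / a j" for t
proof -
    have "lin a (line x v t) \<noteq> 0" using that j by (auto simp: lin_line lv field_simps add_eq_0_iff)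
    then show ?thesis using z p by (metis mult_eq_0_iff)
  qed
  then have "p = 0" by (intro complex_poly_eq_0_if_cofinite_roots) blast
  then show "h x r = 0 x r" using p[rule_format, of 0] by (simp add: line_def)
qed

lemma poly_on_lines_common_nonzero:
  fixes S :: "(('n::finite \<Rightarrow> complex) \<Rightarrow> complex) set"
  assumes "finite S" "\<forall>g\<in>S. poly_on_lines g \<and> (\<exists>y. g y \<noteq> 0)"
  shows "\<exists>x. \<forall>g\<in>S. g x \<noteq> 0"
  using assms
proof (induction S)
  case empty then show ?case by simp
next
  case (insert f S)
  then obtain x where x: "\<forall>g\<in>S. g x \<noteq> 0" by auto
  obtain y where y: "f y \<noteq> 0" using insert.prems by auto
  define v where "v = (\<lambda>j. y j - x j)"
  have "\<forall>g\<in>insert f S. \<exists>p. \<forall>t. g (line x v t) = poly p t"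
    using insert.prems unfolding poly_on_lines_def by blast
  then obtain P where P: "\<forall>g\<in>insert f S. \<forall>t. g (line x v t) = poly (P g) t" by metis
  have "line x v 0 = x" "line x v 1 = y" by (simp_all add: line_def v_def)
  then have nz: "\<forall>g\<in>insert f S. P g \<noteq> 0" using P x y by (metis insert_iff poly_0)
  define Q where "Q = (\<Prod>g\<in>insert f S. P g)"
  have "Q \<noteq> 0" unfolding Q_def using nz insert.hyps by (simp add: prod_zero_iff)
  then have "finite {t. poly Q t = 0}" by (rule poly_roots_finite)
  then obtain t where t: "poly Q t \<noteq> 0" using ex_new_if_finite[OF infinite_UNIV_char_0] by blast
  have "\<forall>g\<in>insert f S. poly (P g) t \<noteq> 0"
    using t insert.hyps unfolding Q_def by (auto simp: poly_prod prod_zero_iff)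
  then show ?case using P by metis
qed

lemma poly_linear_combination:
  "poly ([:0, d:] * q + (\<Sum>w\<in>S. Polynomial.smult (k w) (p w))) t = t * d * poly q t + (\<Sum>w\<in>S. k w * poly (p w) t)"
  by (simp add: poly_sum mult.assoc)

text \<open>Multiplication by \<open>d t\<close> raises degrees, so no nonzero family of polynomials can satisfy
  such a system: look at a member of maximal degree.\<close>
lemma polys_eq_0_if_degree_raising_relation:
  fixes p :: "'a \<Rightarrow> 'b::idom poly"
  assumes S: "finite S" and d: "\<forall>y\<in>S. d y \<noteq> 0"
    and rel: "\<forall>y\<in>S. [:0, d y:] * p y + (\<Sum>w\<in>S. Polynomial.smult (k y w) (p w)) = 0"
  shows "\<forall>y\<in>S. p y = 0"
proof (rule ccontr)
  assume "\<not> (\<forall>y\<in>S. p y = 0)"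
  define S' where "S' = {w \<in> S. p w \<noteq> 0}"
  have S': "S' \<noteq> {}" "finite S'" unfolding S'_def using \<open>\<not> (\<forall>y\<in>S. p y = 0)\<close> S by auto
  define m where "m = Max (degree ` p ` S')"
  have "m \<in> degree ` p ` S'" unfolding m_def using S' by (intro Max_in) auto
  then obtain y where y: "y \<in> S'" "degree (p y) = m" by auto
  have "degree ([:0, d y:] * p y) = m + 1"
    using d y unfolding S'_def by (subst degree_mult_eq) auto
  moreover have "degree (\<Sum>w\<in>S. Polynomial.smult (k y w) (p w)) \<le> m"
  proof (rule degree_sum_le[OF S])
    fix w assume "w \<in> S"
    then have "p w = 0 \<or> w \<in> S'" unfolding S'_def by auto
    then have "p w = 0 \<or> degree (p w) \<le> m" unfolding m_def using S'(2) by (auto intro: Max_ge)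
    then show "degree (Polynomial.smult (k y w) (p w)) \<le> m" using degree_smult_le order_trans by fastforce
  qed
  ultimately have "degree ([:0, d y:] * p y + (\<Sum>w\<in>S. Polynomial.smult (k y w) (p w))) = m + 1"
    by (subst degree_add_eq_left) auto
  then show False using rel y unfolding S'_def by simp
qed

lemma tpoly_imp_rpoly: "f \<in> tpoly \<Longrightarrow> (\<lambda>x r. f x) \<in> rpoly"
  by (induction rule: tpoly.induct) (auto intro: rpoly.intros)

lemma rpoly_add: "f \<in> rpoly \<Longrightarrow> g \<in> rpoly \<Longrightarrow> f + g \<in> rpoly"
  using rpoly.radd[of f g] by (simp add: plus_fun_def)

lemma rpoly_mult: "f \<in> rpoly \<Longrightarrow> g \<in> rpoly \<Longrightarrow> f * g \<in> rpoly"
  using rpoly.rmult[of f g] by (simp add: times_fun_def)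

lemma rpoly_0: "0 \<in> rpoly"
  unfolding zero_fun_def by (rule rpoly.rconst)

lemma rpoly_uminus: "f \<in> rpoly \<Longrightarrow> - f \<in> rpoly"
  using rpoly.rmult[OF rpoly.rconst[of "-1"], of f] by (simp add: fun_Compl_def)

lemma rpoly_diff: "f \<in> rpoly \<Longrightarrow> g \<in> rpoly \<Longrightarrow> f - g \<in> rpoly"
  using rpoly_add[OF _ rpoly_uminus] by (simp only: diff_conv_add_uminus)

lemma rpoly_sum: "\<forall>k\<in>K. g k \<in> rpoly \<Longrightarrow> (\<Sum>k\<in>K. g k) \<in> rpoly"
  by (induction K rule: infinite_finite_induct) (auto intro: rpoly_0 rpoly_add)

lemma sum_apply2: "(\<Sum>k\<in>K. f k) x r = (\<Sum>k\<in>K. f k x r)"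
  by (induction K rule: infinite_finite_induct) auto

lemma rpoly_lin: "(\<lambda>x r. lin a x) \<in> rpoly"
proof -
  have "(\<Sum>j\<in>UNIV. (\<lambda>x (r::complex). a j * x j)) \<in> rpoly"
    by (rule rpoly_sum) (auto intro: rpoly.rmult rpoly.rconst rpoly.rcoord)
  moreover have "(\<Sum>j\<in>UNIV. (\<lambda>x (r::complex). a j * x j)) = (\<lambda>x r. lin a x)"
    by (intro ext) (simp add: lin_def sum_apply2)
  ultimately show ?thesis by (simp only:)
qed

lemma rpoly_comp_mv: "f \<in> rpoly \<Longrightarrow> (\<lambda>x r. f (mv M x) r) \<in> rpoly"
proof (induction rule: rpoly.induct)
  case (rcoord j)
  have "(\<Sum>k\<in>UNIV. (\<lambda>x (r::complex). M j k * x k)) \<in> rpoly"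
    by (rule rpoly_sum) (auto intro: rpoly.rmult rpoly.rconst rpoly.rcoord)
  moreover have "(\<Sum>k\<in>UNIV. (\<lambda>x (r::complex). M j k * x k)) = (\<lambda>x r. mv M x j)"
    by (intro ext) (simp add: mv_def sum_apply2)
  ultimately show ?case by (simp only:)
qed (auto intro: rpoly.intros)

inductive_set rcpoly :: "(('n::finite \<Rightarrow> complex) \<Rightarrow> complex \<Rightarrow> complex) set" where
  rcconst: "(\<lambda>x r. c) \<in> rcpoly"
| rcvar: "(\<lambda>x r. r) \<in> rcpoly"
| rcadd: "f \<in> rcpoly \<Longrightarrow> g \<in> rcpoly \<Longrightarrow> f + g \<in> rcpoly"
| rcmult: "f \<in> rcpoly \<Longrightarrow> g \<in> rcpoly \<Longrightarrow> f * g \<in> rcpoly"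

lemma rcpoly_imp_rpoly: "f \<in> rcpoly \<Longrightarrow> f \<in> rpoly"
  by (induction rule: rcpoly.induct) (auto intro: rpoly.intros rpoly_add rpoly_mult)

lemma rcpoly_indep_x: "f \<in> rcpoly \<Longrightarrow> f x r = f y r"
  by (induction rule: rcpoly.induct) simp_all

lemma rcpoly_0: "0 \<in> rcpoly"
  unfolding zero_fun_def by (rule rcpoly.rcconst)

section \<open>Graded Hecke algebras\<close>

locale graded_hecke = group W for W :: "'w monoid" +
  fixes \<rho> :: "'w \<Rightarrow> 'n::finite \<Rightarrow> 'n \<Rightarrow> complex"
    and W0 R :: "'w set"
    and I :: "'i set"
    and \<alpha> :: "'i \<Rightarrow> 'n \<Rightarrow> complex"
    and hc :: "'i \<Rightarrow> 'n \<Rightarrow> complex"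
    and s :: "'i \<Rightarrow> 'w"
    and c :: "'i \<Rightarrow> complex"
    and cocyc :: "'w \<Rightarrow> 'w \<Rightarrow> complex"
    and \<iota> :: "(('n \<Rightarrow> complex) \<Rightarrow> complex \<Rightarrow> complex) \<Rightarrow> 'h::ring_1"
    and N :: "'w \<Rightarrow> 'h"
  assumes fin: "finite (carrier W)"
    and rep_hom: "\<forall>w\<in>carrier W. \<forall>v\<in>carrier W. \<rho> (w \<otimes>\<^bsub>W\<^esub> v) = mmul (\<rho> w) (\<rho> v)"
    and rep_one: "\<rho> \<one>\<^bsub>W\<^esub> = idm"
    and W0_sub: "subgroup W0 W" and R_sub: "subgroup R W"
    and W0_R_prod: "W0 <#>\<^bsub>W\<^esub> R = carrier W"
    and s_in: "\<forall>i\<in>I. s i \<in> W0"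
    and W0_gen: "W0 = generate W (s ` I)"
    and alpha_nz: "\<forall>i\<in>I. \<alpha> i \<noteq> (\<lambda>j. 0)"
    and coroot: "\<forall>i\<in>I. lin (\<alpha> i) (hc i) = 2"
    and reflection: "\<forall>i\<in>I. \<forall>x. mv (\<rho> (s i)) x = (\<lambda>j. x j - lin (\<alpha> i) x * hc i j)"
    and nat_nz: "\<forall>w\<in>carrier W. \<forall>v\<in>carrier W. cocyc w v \<noteq> 0"
    and H: "is_graded_hecke W \<rho> R I \<alpha> s c cocyc \<iota> N"
begin

lemma iota_add: "f \<in> rpoly \<Longrightarrow> g \<in> rpoly \<Longrightarrow> \<iota> (f + g) = \<iota> f + \<iota> g"
  using H unfolding is_graded_hecke_def plus_fun_def by blast

lemma iota_mult: "f \<in> rpoly \<Longrightarrow> g \<in> rpoly \<Longrightarrow> \<iota> (f * g) = \<iota> f * \<iota> g"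
  using H unfolding is_graded_hecke_def times_fun_def by blast

lemma iota_one: "\<iota> (\<lambda>x r. 1) = 1"
  using H unfolding is_graded_hecke_def by blast

lemma iota_scalar_central: "\<iota> (\<lambda>x r. a) * h = h * \<iota> (\<lambda>x r. a)"
  using H unfolding is_graded_hecke_def by blast

lemma iota_r_central: "\<iota> (\<lambda>x r. r) * h = h * \<iota> (\<lambda>x r. r)"
  using H unfolding is_graded_hecke_def by blast

lemma N_one: "N \<one>\<^bsub>W\<^esub> = 1"
  using H unfolding is_graded_hecke_def by blast

lemma N_mult:
  "w \<in> carrier W \<Longrightarrow> v \<in> carrier W \<Longrightarrow> N w * N v = \<iota> (\<lambda>x r. cocyc w v) * N (w \<otimes>\<^bsub>W\<^esub> v)"
  using H unfolding is_graded_hecke_def by blast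

lemma hecke_basis:
  "\<exists>!F. (\<forall>w. w \<notin> carrier W \<longrightarrow> F w = (\<lambda>x r. 0)) \<and> (\<forall>w\<in>carrier W. F w \<in> rpoly) \<and>
        h = (\<Sum>w\<in>carrier W. N w * \<iota> (F w))"
  using H unfolding is_graded_hecke_def by blast

lemma cross_relation_tpoly:
  "i \<in> I \<Longrightarrow> f \<in> tpoly \<Longrightarrow>
   N (s i) * \<iota> (\<lambda>x r. f x) - \<iota> (\<lambda>x r. tact (\<rho> (inv\<^bsub>W\<^esub> (s i))) f x) * N (s i)
   = \<iota> (\<lambda>x r. c i * r * divdiff (\<alpha> i) f (tact (\<rho> (inv\<^bsub>W\<^esub> (s i))) f) x)"
  using H unfolding is_graded_hecke_def by blast

lemma R_relation_tpoly:
  "w \<in> R \<Longrightarrow> f \<in> tpoly \<Longrightarrow> N w * \<iota> (\<lambda>x r. f x) = \<iota> (\<lambda>x r. tact (\<rho> (inv\<^bsub>W\<^esub> w)) f x) * N w"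
  using H unfolding is_graded_hecke_def by blast

lemma iota_zero: "\<iota> 0 = 0"
  using iota_add[OF rpoly_0 rpoly_0] by (metis add_cancel_left_left add_0)

lemma iota_const_zero [simp]: "\<iota> (\<lambda>x r. 0) = 0"
  using iota_zero unfolding zero_fun_def .

lemma iota_uminus: "f \<in> rpoly \<Longrightarrow> \<iota> (- f) = - \<iota> f"
  using iota_add[OF _ rpoly_uminus, of f] iota_zero by (metis add.right_inverse eq_neg_iff_add_eq_0)

lemma iota_diff: "f \<in> rpoly \<Longrightarrow> g \<in> rpoly \<Longrightarrow> \<iota> (f - g) = \<iota> f - \<iota> g"
  using iota_add[OF _ rpoly_uminus, of f g] iota_uminus[of g] by (simp only: diff_conv_add_uminus)

lemma iota_sum: "\<forall>k\<in>K. g k \<in> rpoly \<Longrightarrow> \<iota> (\<Sum>k\<in>K. g k) = (\<Sum>k\<in>K. \<iota> (g k))"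
  by (induction K rule: infinite_finite_induct) (simp_all add: iota_zero iota_add rpoly_sum)

lemma iota_central_if_rcpoly: "f \<in> rcpoly \<Longrightarrow> \<iota> f * h = h * \<iota> f"
proof (induction f arbitrary: h rule: rcpoly.induct)
  case (rcconst c) then show ?case by (rule iota_scalar_central)
next
  case rcvar then show ?case by (rule iota_r_central)
next
  case (rcadd f g)
  have "\<iota> (f + g) = \<iota> f + \<iota> g" using rcadd.hyps by (intro iota_add rcpoly_imp_rpoly)
  then show ?case using rcadd.IH by (simp only: distrib_left distrib_right)
next
  case (rcmult f g)
  have "\<iota> (f * g) = \<iota> f * \<iota> g" using rcmult.hyps by (intro iota_mult rcpoly_imp_rpoly)
  then show ?case using rcmult.IH by (metis mult.assoc)
qed

lemma N_mult_inverse: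
  assumes "w \<in> carrier W" "v \<in> carrier W"
  shows "N (w \<otimes>\<^bsub>W\<^esub> v) = \<iota> (\<lambda>x r. inverse (cocyc w v)) * (N w * N v)"
proof -
  have "\<iota> (\<lambda>x r. inverse (cocyc w v)) * \<iota> (\<lambda>x r. cocyc w v)
      = \<iota> ((\<lambda>x r. inverse (cocyc w v)) * (\<lambda>x r. cocyc w v))"
    by (rule iota_mult[symmetric]) (rule rpoly.rconst)+
  also have "(\<lambda>x r. inverse (cocyc w v)) * (\<lambda>x r. cocyc w v) = (\<lambda>x r. 1)"
    using assms nat_nz by (simp add: fun_eq_iff)
  finally show ?thesis using assms by (simp add: N_mult iota_one mult.assoc[symmetric])
qed

definition act :: "'w \<Rightarrow> (('n \<Rightarrow> complex) \<Rightarrow> complex \<Rightarrow> complex) \<Rightarrow> (('n \<Rightarrow> complex) \<Rightarrow> complex \<Rightarrow> complex)" where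
  "act w f = ract (\<rho> (inv\<^bsub>W\<^esub> w)) f"

lemma act_apply: "act w f x r = f (mv (\<rho> (inv\<^bsub>W\<^esub> w)) x) r"
  by (simp add: act_def ract_def)

lemma act_rpoly: "f \<in> rpoly \<Longrightarrow> act w f \<in> rpoly"
  unfolding act_def ract_def by (rule rpoly_comp_mv)

lemma act_add: "act w (f + g) = act w f + act w g"
  and act_times: "act w (f * g) = act w f * act w g"
  and act_zero: "act w 0 = 0"
  and act_const: "act w (\<lambda>x r. a) = (\<lambda>x r. a)"
  and act_r: "act w (\<lambda>x r. r) = (\<lambda>x r. r)"
  by (simp_all add: act_def ract_def fun_eq_iff)

lemma act_lin: "act w (\<lambda>x r. lin a x) = (\<lambda>x r. lin (funct_act (\<rho> (inv\<^bsub>W\<^esub> w)) a) x)"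
  unfolding act_def ract_def lin_mv ..

lemma act_one: "act \<one>\<^bsub>W\<^esub> f = f"
  by (simp add: act_def ract_def rep_one mv_idm)

lemma act_mult:
  assumes "w \<in> carrier W" "v \<in> carrier W"
  shows "act (w \<otimes>\<^bsub>W\<^esub> v) f = act w (act v f)"
proof -
  have "\<rho> (inv\<^bsub>W\<^esub> (w \<otimes>\<^bsub>W\<^esub> v)) = mmul (\<rho> (inv\<^bsub>W\<^esub> v)) (\<rho> (inv\<^bsub>W\<^esub> w))"
    using assms rep_hom by (simp add: inv_mult_group)
  then show ?thesis by (simp add: act_def ract_def mv_mmul)
qed

lemma act_inv_cancel: "w \<in> carrier W \<Longrightarrow> act w (act (inv\<^bsub>W\<^esub> w) f) = f"
  using act_mult[of w "inv\<^bsub>W\<^esub> w" f] by (simp add: act_one)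

lemma s_carrier: "i \<in> I \<Longrightarrow> s i \<in> carrier W"
  using s_in W0_sub by (metis subgroup.mem_carrier)

lemma R_carrier: "w \<in> R \<Longrightarrow> w \<in> carrier W"
  using R_sub by (metis subgroup.mem_carrier)

text \<open>In a finite group inverses are positive powers, so closure under products suffices.\<close>
lemma W_induct [consumes 1, case_names one reflection R mult]:
  assumes w: "w \<in> carrier W"
    and one: "P \<one>\<^bsub>W\<^esub>" and reflection: "\<And>i. i \<in> I \<Longrightarrow> P (s i)" and R: "\<And>w. w \<in> R \<Longrightarrow> P w"
    and mult: "\<And>w v. w \<in> carrier W \<Longrightarrow> v \<in> carrier W \<Longrightarrow> P w \<Longrightarrow> P v \<Longrightarrow> P (w \<otimes>\<^bsub>W\<^esub> v)"
  shows "P w"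
proof -
  have sub: "s ` I \<subseteq> carrier W" using s_carrier by blast
  have pow: "P (x [^]\<^bsub>W\<^esub> (n::nat))" if "x \<in> carrier W" "P x" for x n
    using that by (induction n) (auto simp: one mult)
  have inv: "P (inv\<^bsub>W\<^esub> x)" if x: "x \<in> carrier W" "P x" for x
proof -
    have "Coset.order W > 0" using fin by (simp add: order_gt_0_iff_finite)
    then have "x [^]\<^bsub>W\<^esub> (Coset.order W - 1) \<otimes>\<^bsub>W\<^esub> x = \<one>\<^bsub>W\<^esub>"
      using x nat_pow_Suc[of x "Coset.order W - 1"] pow_order_eq_1 by simp
    then have "inv\<^bsub>W\<^esub> x = x [^]\<^bsub>W\<^esub> (Coset.order W - 1)" using x by (intro inv_equality) auto
    then show ?thesis using pow[OF x] by simp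
  qed
  have W0: "P y" if "y \<in> W0" for y
    using that unfolding W0_gen
  proof induction
    case (eng h1 h2) then show ?case using mult generate_in_carrier[OF sub] by blast
  qed (use one reflection sub inv in auto)
  obtain a b where ab: "a \<in> W0" "b \<in> R" "w = a \<otimes>\<^bsub>W\<^esub> b"
    using w W0_R_prod unfolding set_mult_def by blast
  have "a \<in> carrier W" using ab(1) W0_sub by (metis subgroup.mem_carrier)
  then show ?thesis using mult[OF _ R_carrier] W0 R ab by simp
qed

lemma mv_refl_involutive:
  assumes i: "i \<in> I" shows "mv (\<rho> (s i)) (mv (\<rho> (s i)) y) = y"
proof -
  have r: "\<And>z. mv (\<rho> (s i)) z = (\<lambda>j. z j - lin (\<alpha> i) z * hc i j)" using reflection i by blast
  have "lin (\<alpha> i) (\<lambda>j. y j - lin (\<alpha> i) y * hc i j) = - lin (\<alpha> i) y"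
    using coroot i by (simp add: lin_diff_smult)
  then show ?thesis unfolding r by (simp add: fun_eq_iff)
qed

lemma mv_refl_inv: "i \<in> I \<Longrightarrow> mv (\<rho> (inv\<^bsub>W\<^esub> (s i))) x = mv (\<rho> (s i)) x"
proof -
  assume i: "i \<in> I"
  then have si: "s i \<in> carrier W" "inv\<^bsub>W\<^esub> (s i) \<in> carrier W" by (simp_all add: s_carrier)
  have "mmul (\<rho> (inv\<^bsub>W\<^esub> (s i))) (\<rho> (s i)) = \<rho> (inv\<^bsub>W\<^esub> (s i) \<otimes>\<^bsub>W\<^esub> s i)"
    by (rule rep_hom[rule_format, OF si(2,1), symmetric])
  also have "\<dots> = idm" using si by (simp add: rep_one)
  finally have "mv (\<rho> (inv\<^bsub>W\<^esub> (s i))) (mv (\<rho> (s i)) z) = z" for z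
    by (metis mv_mmul mv_idm)
  then show ?thesis using mv_refl_involutive[OF i] by metis
qed

lemma act_refl: "i \<in> I \<Longrightarrow> act (s i) f x r = f (\<lambda>j. x j - lin (\<alpha> i) x * hc i j) r"
  using reflection by (simp add: act_apply mv_refl_inv)

lemma act_refl_involutive: "i \<in> I \<Longrightarrow> act (s i) (act (s i) f) = f"
  by (intro ext) (simp add: act_apply mv_refl_inv mv_refl_involutive)

lemma refl_ne_one: "i \<in> I \<Longrightarrow> s i \<noteq> \<one>\<^bsub>W\<^esub>"
proof
  assume i: "i \<in> I" and "s i = \<one>\<^bsub>W\<^esub>"
  then have "mv (\<rho> (s i)) (hc i) = hc i" by (simp only: rep_one mv_idm)
  moreover have "mv (\<rho> (s i)) (hc i) = (\<lambda>j. hc i j - 2 * hc i j)" using reflection coroot i by simp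
  ultimately have "hc i = (\<lambda>j. 0)" by (simp add: fun_eq_iff)
  then have "lin (\<alpha> i) (hc i) = 0" by (simp add: lin_def)
  then show False using coroot i by simp
qed

lemma divdiff_coord:
  assumes i: "i \<in> I"
  shows "divdiff (\<alpha> i) (\<lambda>x. x j) (tact (\<rho> (inv\<^bsub>W\<^esub> (s i))) (\<lambda>x. x j)) = (\<lambda>x. hc i j)"
  unfolding divdiff_def
proof (rule the_equality)
  have t: "tact (\<rho> (inv\<^bsub>W\<^esub> (s i))) (\<lambda>x. x j) x = x j - lin (\<alpha> i) x * hc i j" for x
    using reflection i by (simp add: tact_def mv_refl_inv)
  then show "(\<lambda>x. hc i j) \<in> tpoly \<and>
      (\<forall>x. lin (\<alpha> i) x * hc i j = x j - tact (\<rho> (inv\<^bsub>W\<^esub> (s i))) (\<lambda>x. x j) x)"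
    by (simp add: tpoly.tconst)
  fix h assume h: "h \<in> tpoly \<and> (\<forall>x. lin (\<alpha> i) x * h x = x j - tact (\<rho> (inv\<^bsub>W\<^esub> (s i))) (\<lambda>x. x j) x)"
  have "(\<lambda>x r. h x) - (\<lambda>x r. hc i j) \<in> rpoly"
    using h tpoly_imp_rpoly[of h] rpoly.rconst by (intro rpoly_diff) auto
  moreover have "\<forall>x r. lin (\<alpha> i) x * ((\<lambda>x r. h x) - (\<lambda>x r. hc i j)) x r = 0"
    using h by (simp add: t right_diff_distrib)
  ultimately have "(\<lambda>(x::'n \<Rightarrow> complex) (r::complex). h x) - (\<lambda>x r. hc i j) = 0"
    using rpoly_eq_0_if_lin_mult_eq_0 alpha_nz i by blast
  then show "h = (\<lambda>x. hc i j)" by (simp add: fun_eq_iff)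
qed

section \<open>The cross relations on all of \<open>S(t\<^sup>*) \<otimes> \<complex>[r]\<close>\<close>

definition cr :: "'i \<Rightarrow> ('n \<Rightarrow> complex) \<Rightarrow> complex \<Rightarrow> complex" where
  "cr i = (\<lambda>x r. c i * r)"

lemma cr_rcpoly: "cr i \<in> rcpoly"
proof -
  have "cr i = (\<lambda>x r. c i) * (\<lambda>x r. r)" by (simp add: cr_def fun_eq_iff)
  then show ?thesis by (simp add: rcpoly.rcmult rcpoly.rcconst rcpoly.rcvar)
qed

lemma cr_rpoly: "cr i \<in> rpoly"
  using cr_rcpoly by (rule rcpoly_imp_rpoly)

text \<open>The witness \<open>h\<close> is the divided difference \<open>(f - s\<^sub>i f)/\<alpha>\<^sub>i\<close>.\<close>
definition cross_relation_holds :: "'i \<Rightarrow> (('n \<Rightarrow> complex) \<Rightarrow> complex \<Rightarrow> complex) \<Rightarrow> bool" where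
  "cross_relation_holds i f \<longleftrightarrow> (\<exists>h\<in>rpoly. (\<forall>x r. lin (\<alpha> i) x * h x r = f x r - act (s i) f x r) \<and>
      N (s i) * \<iota> f - \<iota> (act (s i) f) * N (s i) = \<iota> (cr i * h))"

lemma cross_relation_holds_if_fixed:
  assumes "act (s i) f = f" "N (s i) * \<iota> f = \<iota> f * N (s i)"
  shows "cross_relation_holds i f"
  unfolding cross_relation_holds_def using assms rpoly_0 iota_zero by (intro bexI[of _ 0]) simp_all

lemma cross_relation_holds_coord:
  assumes i: "i \<in> I" shows "cross_relation_holds i (\<lambda>x r. x j)"
  unfolding cross_relation_holds_def
proof (intro bexI[of _ "\<lambda>x r. hc i j"] conjI)
  have "(\<lambda>x r. tact (\<rho> (inv\<^bsub>W\<^esub> (s i))) (\<lambda>x. x j) x) = act (s i) (\<lambda>x r. x j)"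
    by (simp add: act_def ract_def tact_def)
  moreover have "(\<lambda>x r. c i * r * (\<lambda>x. hc i j) x) = cr i * (\<lambda>x r. hc i j)"
    by (simp add: cr_def fun_eq_iff)
  ultimately show "N (s i) * \<iota> (\<lambda>x r. x j) - \<iota> (act (s i) (\<lambda>x r. x j)) * N (s i)
      = \<iota> (cr i * (\<lambda>x r. hc i j))"
    using cross_relation_tpoly[OF i tpoly.tcoord[of j]] unfolding divdiff_coord[OF i] by simp
  show "\<forall>x r. lin (\<alpha> i) x * hc i j = x j - act (s i) (\<lambda>x r. x j) x r"
    using i by (simp add: act_refl)
qed (rule rpoly.rconst)

lemma cross_relation_holds_add:
  assumes f: "f \<in> rpoly" "cross_relation_holds i f" and g: "g \<in> rpoly" "cross_relation_holds i g"
  shows "cross_relation_holds i (f + g)"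
proof -
  obtain hf hg where hf: "hf \<in> rpoly" "\<forall>x r. lin (\<alpha> i) x * hf x r = f x r - act (s i) f x r"
      "N (s i) * \<iota> f - \<iota> (act (s i) f) * N (s i) = \<iota> (cr i * hf)"
    and hg: "hg \<in> rpoly" "\<forall>x r. lin (\<alpha> i) x * hg x r = g x r - act (s i) g x r"
      "N (s i) * \<iota> g - \<iota> (act (s i) g) * N (s i) = \<iota> (cr i * hg)"
    using f(2) g(2) unfolding cross_relation_holds_def by blast
  have "\<forall>x r. lin (\<alpha> i) x * (hf + hg) x r = (f + g) x r - act (s i) (f + g) x r"
    using hf(2) hg(2) by (simp add: act_add distrib_left)
  moreover have "N (s i) * \<iota> (f + g) - \<iota> (act (s i) (f + g)) * N (s i)
      = (N (s i) * \<iota> f - \<iota> (act (s i) f) * N (s i)) + (N (s i) * \<iota> g - \<iota> (act (s i) g) * N (s i))"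
    using f g by (simp add: act_add iota_add act_rpoly algebra_simps)
  moreover have "\<iota> (cr i * hf) + \<iota> (cr i * hg) = \<iota> (cr i * (hf + hg))"
    using hf hg cr_rpoly by (simp add: iota_add[symmetric] rpoly_mult distrib_left)
  ultimately show ?thesis
    unfolding cross_relation_holds_def using hf(1,3) hg(1,3) rpoly_add by metis
qed

text \<open>The twisted Leibniz rule \<open>\<Delta>(fg) = (s\<^sub>i f) \<Delta>(g) + \<Delta>(f) g\<close> for divided differences.\<close>
lemma cross_relation_holds_mult:
  assumes f: "f \<in> rpoly" "cross_relation_holds i f" and g: "g \<in> rpoly" "cross_relation_holds i g"
  shows "cross_relation_holds i (f * g)"
proof -
  obtain hf hg where hf: "hf \<in> rpoly" "\<forall>x r. lin (\<alpha> i) x * hf x r = f x r - act (s i) f x r"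
      "N (s i) * \<iota> f = \<iota> (act (s i) f) * N (s i) + \<iota> (cr i * hf)"
    and hg: "hg \<in> rpoly" "\<forall>x r. lin (\<alpha> i) x * hg x r = g x r - act (s i) g x r"
      "N (s i) * \<iota> g = \<iota> (act (s i) g) * N (s i) + \<iota> (cr i * hg)"
    using f(2) g(2) unfolding cross_relation_holds_def by (metis diff_eq_eq add.commute)
  define h where "h = act (s i) f * hg + hf * g"
  have h: "h \<in> rpoly" unfolding h_def using hf hg f g by (intro rpoly_add rpoly_mult act_rpoly)
  have "lin (\<alpha> i) x * h x r = (f * g) x r - act (s i) (f * g) x r" for x r
proof -
    have "lin (\<alpha> i) x * h x r = act (s i) f x r * (lin (\<alpha> i) x * hg x r) + (lin (\<alpha> i) x * hf x r) * g x r"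
      by (simp add: h_def algebra_simps)
    also have "\<dots> = act (s i) f x r * (g x r - act (s i) g x r) + (f x r - act (s i) f x r) * g x r"
      using hf(2) hg(2) by (simp only:)
    also have "\<dots> = f x r * g x r - act (s i) f x r * act (s i) g x r"
      by (simp add: algebra_simps)
    finally show ?thesis by (simp add: act_times)
  qed
  moreover have "N (s i) * \<iota> (f * g) - \<iota> (act (s i) (f * g)) * N (s i) = \<iota> (cr i * h)"
proof -
    have "N (s i) * \<iota> (f * g) - \<iota> (act (s i) (f * g)) * N (s i)
        = \<iota> (act (s i) f) * \<iota> (cr i * hg) + \<iota> (cr i * hf) * \<iota> g"
      using f g by (simp add: iota_mult act_times act_rpoly mult.assoc[symmetric] hf(3))
        (simp add: mult.assoc hg(3) algebra_simps)
    also have "\<dots> = \<iota> (act (s i) f * (cr i * hg) + cr i * hf * g)"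
      using hf hg f g cr_rpoly by (simp add: iota_mult iota_add rpoly_mult rpoly_add act_rpoly)
    also have "act (s i) f * (cr i * hg) + cr i * hf * g = cr i * h"
      unfolding h_def by (simp only: algebra_simps)
    finally show ?thesis .
  qed
  ultimately show ?thesis unfolding cross_relation_holds_def using h by blast
qed

lemma cross_relation:
  assumes i: "i \<in> I" and f: "f \<in> rpoly" shows "cross_relation_holds i f"
  using f
proof induction
  case (rconst a) show ?case
    by (rule cross_relation_holds_if_fixed) (simp_all add: act_const iota_scalar_central)
next
  case (rcoord j) show ?case using i by (rule cross_relation_holds_coord)
next
  case rvar show ?case
    by (rule cross_relation_holds_if_fixed) (simp_all add: act_r iota_r_central)
next
  case (radd f g)
  then have "cross_relation_holds i (f + g)" by (intro cross_relation_holds_add)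
  then show ?case by (simp add: plus_fun_def)
next
  case (rmult f g)
  then have "cross_relation_holds i (f * g)" by (intro cross_relation_holds_mult)
  then show ?case by (simp add: times_fun_def)
qed

lemma R_relation:
  assumes w: "w \<in> R" and f: "f \<in> rpoly"
  shows "N w * \<iota> f = \<iota> (act w f) * N w"
  using f
proof induction
  case (rconst a) show ?case using iota_scalar_central[of a "N w"] by (simp add: act_const)
next
  case (rcoord j)
  have "(\<lambda>x r. tact (\<rho> (inv\<^bsub>W\<^esub> w)) (\<lambda>x. x j) x) = act w (\<lambda>x r. x j)"
    by (simp add: act_def ract_def tact_def)
  then show ?case using R_relation_tpoly[OF w tpoly.tcoord[of j]] by simp
next
  case rvar show ?case using iota_r_central[of "N w"] by (simp add: act_r)
next
  case (radd f g)
  then have "N w * \<iota> (f + g) = \<iota> (act w (f + g)) * N w"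
    by (simp add: act_add iota_add act_rpoly algebra_simps)
  then show ?case by (simp add: plus_fun_def)
next
  case (rmult f g)
  then have "N w * \<iota> (f * g) = \<iota> (act w (f * g)) * N w"
    by (simp add: act_times iota_mult act_rpoly mult.assoc[symmetric]) (simp add: mult.assoc)
  then show ?case by (simp add: times_fun_def)
qed

section \<open>Invariants are central\<close>

lemma iota_commute: "f \<in> rpoly \<Longrightarrow> g \<in> rpoly \<Longrightarrow> \<iota> f * \<iota> g = \<iota> g * \<iota> f"
  by (metis iota_mult mult.commute)

lemma inv_rpoly_act: "f \<in> inv_rpoly W \<rho> \<Longrightarrow> w \<in> carrier W \<Longrightarrow> act w f = f"
  unfolding inv_rpoly_def act_def by blast

lemma invariant_commute_N:
  assumes f: "f \<in> inv_rpoly W \<rho>" and w: "w \<in> carrier W"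
  shows "N w * \<iota> f = \<iota> f * N w"
  using w
proof (induction w rule: W_induct)
  case one show ?case by (simp add: N_one)
next
  case (reflection i)
  have fr: "f \<in> rpoly" using f unfolding inv_rpoly_def by blast
  have sf: "act (s i) f = f" using inv_rpoly_act[OF f s_carrier[OF reflection]] .
  obtain h where h: "h \<in> rpoly" "\<forall>x r. lin (\<alpha> i) x * h x r = 0"
      "N (s i) * \<iota> f - \<iota> f * N (s i) = \<iota> (cr i * h)"
    using cross_relation[OF reflection fr] unfolding cross_relation_holds_def sf by auto
  then have "h = 0" using rpoly_eq_0_if_lin_mult_eq_0 alpha_nz reflection by blast
  then show ?case using h(3) by (simp add: iota_zero)
next
  case (R w)
  then show ?case using R_relation f inv_rpoly_act R_carrier unfolding inv_rpoly_def by auto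
next
  case (mult w v)
  then show ?case using iota_scalar_central
    by (simp add: N_mult_inverse mult.assoc) (simp add: mult.assoc[symmetric])
qed

lemma invariant_central: "f \<in> inv_rpoly W \<rho> \<Longrightarrow> \<iota> f \<in> centre"
proof -
  assume f: "f \<in> inv_rpoly W \<rho>"
  have fr: "f \<in> rpoly" using f unfolding inv_rpoly_def by blast
  have "\<iota> f * h = h * \<iota> f" for h
proof -
    obtain F where F: "\<forall>w\<in>carrier W. F w \<in> rpoly" "h = (\<Sum>w\<in>carrier W. N w * \<iota> (F w))"
      using hecke_basis[of h] by blast
    have "\<iota> f * (N w * \<iota> (F w)) = (N w * \<iota> (F w)) * \<iota> f" if "w \<in> carrier W" for w
      using invariant_commute_N[OF f that] iota_commute[OF fr, of "F w"] F(1) that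
      by (metis mult.assoc)
    then show ?thesis unfolding F(2) sum_distrib_left sum_distrib_right by (intro sum.cong) auto
  qed
  then show ?thesis unfolding centre_def by blast
qed

section \<open>Central elements of \<open>S(t\<^sup>*) \<otimes> \<complex>[r]\<close> are invariant\<close>

lemma hecke_coeffs_eq_0:
  assumes A: "\<forall>y\<in>carrier W. A y \<in> rpoly" and z: "(\<Sum>y\<in>carrier W. N y * \<iota> (A y)) = 0"
  shows "\<forall>y\<in>carrier W. A y = 0"
proof -
  define F where "F = (\<lambda>w. if w \<in> carrier W then A w else (\<lambda>x r. 0))"
  have "(\<Sum>w\<in>carrier W. N w * \<iota> (F w)) = 0" unfolding F_def using z by simp
  then have "(\<forall>w. w \<notin> carrier W \<longrightarrow> F w = (\<lambda>x r. 0)) \<and> (\<forall>w\<in>carrier W. F w \<in> rpoly) \<and>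
      0 = (\<Sum>w\<in>carrier W. N w * \<iota> (F w))" using A unfolding F_def by simp
  moreover define Z :: "'w \<Rightarrow> ('n \<Rightarrow> complex) \<Rightarrow> complex \<Rightarrow> complex" where "Z = (\<lambda>w x r. 0)"
  then have "(\<forall>w. w \<notin> carrier W \<longrightarrow> Z w = (\<lambda>x r. 0)) \<and> (\<forall>w\<in>carrier W. Z w \<in> rpoly) \<and>
      0 = (\<Sum>w\<in>carrier W. N w * \<iota> (Z w))" by (simp add: rpoly.rconst)
  ultimately have "F = Z" using hecke_basis[of 0] by blast
  then show ?thesis unfolding F_def Z_def by (simp add: fun_eq_iff zero_fun_def) metis
qed

lemma N_iota_eq_0:
  assumes w: "w \<in> carrier W" and a: "a \<in> rpoly" and z: "N w * \<iota> a = 0"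
  shows "a = 0"
proof -
  define A where "A = (\<lambda>y. if y = w then a else 0)"
  have "(\<Sum>y\<in>carrier W. N y * \<iota> (A y)) = (\<Sum>y\<in>carrier W. if y = w then N y * \<iota> a else 0)"
    by (rule sum.cong) (simp_all add: A_def iota_zero)
  also have "\<dots> = N w * \<iota> a" using w fin by simp
  finally have "(\<Sum>y\<in>carrier W. N y * \<iota> (A y)) = N w * \<iota> a" .
  then have "\<forall>y\<in>carrier W. A y = 0" using a rpoly_0 z by (intro hecke_coeffs_eq_0) (auto simp: A_def)
  then show ?thesis using w unfolding A_def by auto
qed

lemma N_iota_eq_N_iota:
  assumes w: "w \<in> carrier W" and v: "v \<in> carrier W" and wv: "w \<noteq> v"
    and a: "a \<in> rpoly" and b: "b \<in> rpoly" and z: "N w * \<iota> a = N v * \<iota> b"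
  shows "a = 0"
proof -
  define A where "A = (\<lambda>y. if y = w then a else if y = v then - b else 0)"
  have "(\<Sum>y\<in>carrier W. N y * \<iota> (A y))
      = (\<Sum>y\<in>carrier W. (if y = w then N y * \<iota> a else 0) + (if y = v then - (N y * \<iota> b) else 0))"
    by (rule sum.cong) (use wv b in \<open>simp_all add: A_def iota_zero iota_uminus\<close>)
  also have "\<dots> = 0" using w v z fin by (simp add: sum.distrib)
  finally have "\<forall>y\<in>carrier W. A y = 0"
    using a b rpoly_0 rpoly_uminus by (intro hecke_coeffs_eq_0) (auto simp: A_def)
  then show ?thesis using w unfolding A_def by auto
qed

text \<open>For central \<open>f\<close>, \<open>(f - s\<^sub>i f) N\<^sub>s\<^sub>i\<close> lies in \<open>S(t\<^sup>*) \<otimes> \<complex>[r]\<close>; multiplying by \<open>N\<^sub>s\<^sub>i\<close>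
  once more produces \<open>N\<^sub>s\<^sub>i\<close> times the difference against an element of \<open>S(t\<^sup>*) \<otimes> \<complex>[r]\<close>,
  and comparing coefficients of \<open>N\<^sub>s\<^sub>i \<noteq> N\<^sub>1\<close> shows that the difference vanishes.\<close>
lemma central_imp_refl_invariant:
  assumes i: "i \<in> I" and f: "f \<in> rpoly" and central: "\<iota> f \<in> centre"
  shows "act (s i) f = f"
proof -
  define g where "g = f - act (s i) f"
  have g: "g \<in> rpoly" "act (s i) g \<in> rpoly" unfolding g_def using f by (simp_all add: rpoly_diff act_rpoly)
  obtain h1 where h1: "h1 \<in> rpoly" "N (s i) * \<iota> f - \<iota> (act (s i) f) * N (s i) = \<iota> (cr i * h1)"
    using cross_relation[OF i f] unfolding cross_relation_holds_def by blast
  obtain h2 where h2: "h2 \<in> rpoly"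
      "N (s i) * \<iota> (act (s i) g) - \<iota> (act (s i) (act (s i) g)) * N (s i) = \<iota> (cr i * h2)"
    using cross_relation[OF i g(2)] unfolding cross_relation_holds_def by blast
  have c: "cr i * h1 \<in> rpoly" "cr i * h2 \<in> rpoly" using h1(1) h2(1) cr_rpoly rpoly_mult by blast+
  have "\<iota> g * N (s i) = \<iota> (cr i * h1)"
    using h1(2) central f unfolding g_def centre_def by (simp add: iota_diff act_rpoly left_diff_distrib)
  then have "N (s i) * \<iota> (act (s i) g) = \<iota> (cr i * h1) + \<iota> (cr i * h2)"
    using h2(2) by (simp add: act_refl_involutive[OF i] algebra_simps)
  also have "\<dots> = N \<one>\<^bsub>W\<^esub> * \<iota> (cr i * h1 + cr i * h2)" using c by (simp add: iota_add N_one)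
  finally have "act (s i) g = 0"
    using s_carrier[OF i] refl_ne_one[OF i] g c
    by (intro N_iota_eq_N_iota[of "s i" "\<one>\<^bsub>W\<^esub>" _ "cr i * h1 + cr i * h2"] rpoly_add) auto
  then have "g = 0" using act_refl_involutive[OF i, of g] act_zero by metis
  then show ?thesis unfolding g_def by simp
qed

lemma central_imp_R_invariant:
  assumes w: "w \<in> R" and f: "f \<in> rpoly" and central: "\<iota> f \<in> centre"
  shows "act w f = f"
proof -
  have wc: "w \<in> carrier W" using w by (rule R_carrier)
  define g where "g = act w f - f"
  have g: "act (inv\<^bsub>W\<^esub> w) g \<in> rpoly" unfolding g_def using f by (simp add: rpoly_diff act_rpoly)
  have "\<iota> g * N w = 0"
    using R_relation[OF w f] central f unfolding g_def centre_def
    by (simp add: iota_diff act_rpoly left_diff_distrib)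
  then have "N w * \<iota> (act (inv\<^bsub>W\<^esub> w) g) = 0"
    using R_relation[OF w g] by (simp add: act_inv_cancel[OF wc])
  then have "act (inv\<^bsub>W\<^esub> w) g = 0" using wc g by (rule N_iota_eq_0[rotated 2])
  then have "g = 0" using act_inv_cancel[OF wc, of g] act_zero by metis
  then show ?thesis unfolding g_def by simp
qed

lemma central_imp_invariant:
  assumes f: "f \<in> rpoly" and central: "\<iota> f \<in> centre"
  shows "f \<in> inv_rpoly W \<rho>"
proof -
  have "act w f = f" if "w \<in> carrier W" for w
    using that
  proof (induction w rule: W_induct)
    case (mult w v) then show ?case by (simp add: act_mult)
  qed (use f central in \<open>simp_all add: act_one central_imp_refl_invariant central_imp_R_invariant\<close>)
  then show ?thesis unfolding inv_rpoly_def act_def using f by blast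
qed

section \<open>Central elements lie in \<open>S(t\<^sup>*) \<otimes> \<complex>[r]\<close>\<close>

definition r_combination :: "'h \<Rightarrow> bool" where
  "r_combination E \<longleftrightarrow> (\<exists>G. (\<forall>y. G y \<in> rcpoly) \<and> E = (\<Sum>y\<in>carrier W. N y * \<iota> (G y)))"

lemma r_combination_0: "r_combination 0"
  unfolding r_combination_def by (rule exI[of _ "\<lambda>y. 0"]) (simp add: rcpoly_0 iota_zero)

lemma r_combination_add: "r_combination A \<Longrightarrow> r_combination B \<Longrightarrow> r_combination (A + B)"
proof -
  assume "r_combination A" "r_combination B"
  then obtain GA GB where GA: "\<forall>y. GA y \<in> rcpoly" "A = (\<Sum>y\<in>carrier W. N y * \<iota> (GA y))"
    and GB: "\<forall>y. GB y \<in> rcpoly" "B = (\<Sum>y\<in>carrier W. N y * \<iota> (GB y))"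
    unfolding r_combination_def by blast
  have "A + B = (\<Sum>y\<in>carrier W. N y * \<iota> (GA y + GB y))"
    unfolding GA(2) GB(2) sum.distrib[symmetric]
    by (rule sum.cong) (use GA GB in \<open>simp_all add: iota_add rcpoly_imp_rpoly distrib_left\<close>)
  moreover have "\<forall>y. GA y + GB y \<in> rcpoly" using GA GB by (auto intro: rcpoly.rcadd)
  ultimately show ?thesis unfolding r_combination_def by (intro exI[of _ "\<lambda>y. GA y + GB y"] conjI)
qed

lemma r_combination_scalar: "k \<in> rcpoly \<Longrightarrow> r_combination A \<Longrightarrow> r_combination (\<iota> k * A)"
proof -
  assume k: "k \<in> rcpoly" and "r_combination A"
  then obtain G where G: "\<forall>y. G y \<in> rcpoly" "A = (\<Sum>y\<in>carrier W. N y * \<iota> (G y))"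
    unfolding r_combination_def by blast
  have "\<iota> k * (N y * \<iota> (G y)) = N y * \<iota> (k * G y)" for y
    using iota_central_if_rcpoly[OF k, of "N y"] k G(1)
    by (simp add: iota_mult rcpoly_imp_rpoly mult.assoc[symmetric])
  then have "\<iota> k * A = (\<Sum>y\<in>carrier W. N y * \<iota> (k * G y))" unfolding G(2) sum_distrib_left by simp
  moreover have "\<forall>y. k * G y \<in> rcpoly" using k G by (auto intro: rcpoly.rcmult)
  ultimately show ?thesis unfolding r_combination_def by (intro exI[of _ "\<lambda>y. k * G y"] conjI)
qed

lemma r_combination_N: "w \<in> carrier W \<Longrightarrow> g \<in> rcpoly \<Longrightarrow> r_combination (N w * \<iota> g)"
proof -
  assume w: "w \<in> carrier W" and g: "g \<in> rcpoly"
  define G where "G = (\<lambda>y. if y = w then g else 0)"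
  have "(\<Sum>y\<in>carrier W. N y * \<iota> (G y)) = (\<Sum>y\<in>carrier W. if y = w then N y * \<iota> g else 0)"
    by (rule sum.cong) (simp_all add: G_def iota_zero)
  also have "\<dots> = N w * \<iota> g" using w fin by simp
  finally have "N w * \<iota> g = (\<Sum>y\<in>carrier W. N y * \<iota> (G y))" ..
  moreover have "\<forall>y. G y \<in> rcpoly" unfolding G_def using g rcpoly_0 by auto
  ultimately show ?thesis unfolding r_combination_def by (intro exI[of _ G] conjI)
qed

lemma r_combination_mult_N: "v \<in> carrier W \<Longrightarrow> r_combination A \<Longrightarrow> r_combination (A * N v)"
proof -
  assume v: "v \<in> carrier W" and "r_combination A"
  then obtain G where G: "\<forall>y. G y \<in> rcpoly" "A = (\<Sum>y\<in>carrier W. N y * \<iota> (G y))"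
    unfolding r_combination_def by blast
  define G' where "G' = (\<lambda>u. (\<lambda>x r. cocyc (u \<otimes>\<^bsub>W\<^esub> inv\<^bsub>W\<^esub> v) v) * G (u \<otimes>\<^bsub>W\<^esub> inv\<^bsub>W\<^esub> v))"
  have "N y * \<iota> (G y) * N v = N (y \<otimes>\<^bsub>W\<^esub> v) * \<iota> (G' (y \<otimes>\<^bsub>W\<^esub> v))" if y: "y \<in> carrier W" for y
proof -
    have "N y * \<iota> (G y) * N v = \<iota> (\<lambda>x r. cocyc y v) * N (y \<otimes>\<^bsub>W\<^esub> v) * \<iota> (G y)"
      using iota_central_if_rcpoly[OF G(1)[rule_format, of y], of "N v"] y v
      by (simp add: mult.assoc N_mult[symmetric])
    also have "\<dots> = N (y \<otimes>\<^bsub>W\<^esub> v) * \<iota> ((\<lambda>x r. cocyc y v) * G y)"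
      using iota_scalar_central G(1) by (simp add: iota_mult rcpoly_imp_rpoly rpoly.rconst mult.assoc)
    finally show ?thesis using y v by (simp add: G'_def m_assoc)
  qed
  then have "A * N v = (\<Sum>y\<in>carrier W. N (y \<otimes>\<^bsub>W\<^esub> v) * \<iota> (G' (y \<otimes>\<^bsub>W\<^esub> v)))"
    unfolding G(2) sum_distrib_right by simp
  also have "\<dots> = (\<Sum>u\<in>carrier W. N u * \<iota> (G' u))"
    using v by (intro sum.reindex_bij_betw bij_betw_byWitness[where f' = "\<lambda>u. u \<otimes>\<^bsub>W\<^esub> inv\<^bsub>W\<^esub> v"])
      (auto simp: m_assoc)
  finally have "A * N v = (\<Sum>u\<in>carrier W. N u * \<iota> (G' u))" .
  moreover have "\<forall>u. G' u \<in> rcpoly" unfolding G'_def using G(1) by (auto intro: rcpoly.intros)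
  ultimately show ?thesis unfolding r_combination_def by (intro exI[of _ G'] conjI)
qed

lemma r_combination_N_mult: "w \<in> carrier W \<Longrightarrow> r_combination A \<Longrightarrow> r_combination (N w * A)"
proof -
  assume w: "w \<in> carrier W" and "r_combination A"
  then obtain G where G: "\<forall>y. G y \<in> rcpoly" "A = (\<Sum>y\<in>carrier W. N y * \<iota> (G y))"
    unfolding r_combination_def by blast
  define G' where "G' = (\<lambda>u. (\<lambda>x r. cocyc w (inv\<^bsub>W\<^esub> w \<otimes>\<^bsub>W\<^esub> u)) * G (inv\<^bsub>W\<^esub> w \<otimes>\<^bsub>W\<^esub> u))"
  have "N w * (N y * \<iota> (G y)) = N (w \<otimes>\<^bsub>W\<^esub> y) * \<iota> (G' (w \<otimes>\<^bsub>W\<^esub> y))" if y: "y \<in> carrier W" for y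
proof -
    have "N w * (N y * \<iota> (G y)) = \<iota> (\<lambda>x r. cocyc w y) * N (w \<otimes>\<^bsub>W\<^esub> y) * \<iota> (G y)"
      using y w by (simp add: N_mult mult.assoc[symmetric])
    also have "\<dots> = N (w \<otimes>\<^bsub>W\<^esub> y) * \<iota> ((\<lambda>x r. cocyc w y) * G y)"
      using iota_scalar_central G(1) by (simp add: iota_mult rcpoly_imp_rpoly rpoly.rconst mult.assoc)
    finally show ?thesis using y w by (simp add: G'_def m_assoc[symmetric])
  qed
  then have "N w * A = (\<Sum>y\<in>carrier W. N (w \<otimes>\<^bsub>W\<^esub> y) * \<iota> (G' (w \<otimes>\<^bsub>W\<^esub> y)))"
    unfolding G(2) sum_distrib_left by simp
  also have "\<dots> = (\<Sum>u\<in>carrier W. N u * \<iota> (G' u))"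
    using w by (intro sum.reindex_bij_betw bij_betw_byWitness[where f' = "\<lambda>u. inv\<^bsub>W\<^esub> w \<otimes>\<^bsub>W\<^esub> u"])
      (auto simp: m_assoc[symmetric])
  finally have "N w * A = (\<Sum>u\<in>carrier W. N u * \<iota> (G' u))" .
  moreover have "\<forall>u. G' u \<in> rcpoly" unfolding G'_def using G(1) by (auto intro: rcpoly.intros)
  ultimately show ?thesis unfolding r_combination_def by (intro exI[of _ G'] conjI)
qed

definition twisted_commutator :: "('n \<Rightarrow> complex) \<Rightarrow> 'w \<Rightarrow> 'h" where
  "twisted_commutator a w =
     \<iota> (\<lambda>x r. lin a x) * N w - N w * \<iota> (act (inv\<^bsub>W\<^esub> w) (\<lambda>x r. lin a x))"

text \<open>For a simple reflection the commutator is the scalar \<open>c\<^sub>i r \<langle>a, hc\<^sub>i\<rangle>\<close>.\<close>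
lemma r_combination_commutator_refl:
  assumes i: "i \<in> I" shows "r_combination (twisted_commutator a (s i))"
proof -
  define L where "L = (\<lambda>(x::'n \<Rightarrow> complex) (r::complex). lin a x)"
  define \<eta> where "\<eta> = act (inv\<^bsub>W\<^esub> (s i)) L"
  define k where "k = (\<lambda>(x::'n \<Rightarrow> complex) (r::complex). lin a (hc i))"
  have si: "s i \<in> carrier W" using i by (rule s_carrier)
  have \<eta>: "\<eta> \<in> rpoly" unfolding \<eta>_def L_def by (intro act_rpoly rpoly_lin)
  have s\<eta>: "act (s i) \<eta> = L" unfolding \<eta>_def using si by (rule act_inv_cancel)
  obtain h where h: "h \<in> rpoly" "\<forall>x r. lin (\<alpha> i) x * h x r = \<eta> x r - L x r"
      "N (s i) * \<iota> \<eta> - \<iota> L * N (s i) = \<iota> (cr i * h)"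
    using cross_relation[OF i \<eta>] unfolding cross_relation_holds_def s\<eta> by blast
  have "\<eta> x r = lin a x - lin (\<alpha> i) x * lin a (hc i)" for x r
    using reflection i si by (simp add: \<eta>_def L_def act_apply lin_diff_smult)
  then have "lin (\<alpha> i) x * h x r = - (lin (\<alpha> i) x * lin a (hc i))" for x r
    using h(2) by (simp add: L_def)
  then have "\<forall>x r. lin (\<alpha> i) x * (h + k) x r = 0" by (simp add: k_def distrib_left)
  moreover have "h + k \<in> rpoly" unfolding k_def using h(1) by (intro rpoly_add rpoly.rconst)
  ultimately have "h + k = 0" using rpoly_eq_0_if_lin_mult_eq_0 alpha_nz i by blast
  then have "cr i * h + cr i * k = 0" by (simp only: distrib_left[symmetric] mult_zero_right)
  then have "cr i * h = - (cr i * k)" by (simp only: eq_neg_iff_add_eq_0)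
  moreover have ck: "cr i * k \<in> rcpoly" unfolding k_def by (intro rcpoly.rcmult cr_rcpoly rcpoly.rcconst)
  ultimately have "\<iota> (cr i * h) = - \<iota> (cr i * k)" by (simp only: iota_uminus rcpoly_imp_rpoly)
  moreover have "twisted_commutator a (s i) = - (N (s i) * \<iota> \<eta> - \<iota> L * N (s i))"
    unfolding twisted_commutator_def L_def[symmetric] \<eta>_def[symmetric] by (simp only: minus_diff_eq)
  ultimately have "twisted_commutator a (s i) = N \<one>\<^bsub>W\<^esub> * \<iota> (cr i * k)" using h(3) by (simp add: N_one)
  then show ?thesis using ck by (simp add: r_combination_N)
qed

lemma twisted_commutator_mult:
  fixes a :: "'n \<Rightarrow> complex"
  assumes w: "w \<in> carrier W" and v: "v \<in> carrier W"
  defines "a' \<equiv> funct_act (\<rho> w) a"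
  shows "twisted_commutator a (w \<otimes>\<^bsub>W\<^esub> v)
    = \<iota> (\<lambda>x r. inverse (cocyc w v)) * (twisted_commutator a w * N v + N w * twisted_commutator a' v)"
proof -
  define L where "L = (\<lambda>(x::'n \<Rightarrow> complex) (r::complex). lin a x)"
  define K where "K = \<iota> (\<lambda>x r. inverse (cocyc w v))"
  define X where "X = \<iota> (act (inv\<^bsub>W\<^esub> v) (\<lambda>x r. lin a' x))"
  have L': "act (inv\<^bsub>W\<^esub> w) L = (\<lambda>x r. lin a' x)"
    using w unfolding L_def a'_def act_lin by simp
  have "act (inv\<^bsub>W\<^esub> (w \<otimes>\<^bsub>W\<^esub> v)) L = act (inv\<^bsub>W\<^esub> v) (act (inv\<^bsub>W\<^esub> w) L)"
    using w v by (simp only: inv_mult_group act_mult inv_closed)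
  then have "twisted_commutator a (w \<otimes>\<^bsub>W\<^esub> v) = \<iota> L * (K * (N w * N v)) - K * (N w * N v) * X"
    unfolding twisted_commutator_def L_def[symmetric] K_def X_def N_mult_inverse[OF w v] L' by simp
  also have "\<dots> = K * (\<iota> L * N w * N v - N w * N v * X)"
proof -
    have "\<iota> L * K = K * \<iota> L" unfolding K_def by (rule iota_scalar_central[symmetric])
    then have "\<iota> L * (K * (N w * N v)) = K * (\<iota> L * N w * N v)" by (simp only: mult.assoc[symmetric])
    then show ?thesis by (simp only: right_diff_distrib mult.assoc)
  qed
  also have "\<iota> L * N w * N v - N w * N v * X = twisted_commutator a w * N v + N w * twisted_commutator a' v"
    unfolding twisted_commutator_def L_def[symmetric] L' X_def by (simp add: algebra_simps)
  finally show ?thesis unfolding K_def .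
qed

lemma r_combination_commutator: "w \<in> carrier W \<Longrightarrow> r_combination (twisted_commutator a w)"
proof (induction w arbitrary: a rule: W_induct)
  case one
  show ?case by (simp add: twisted_commutator_def N_one act_one r_combination_0)
next
  case (reflection i) then show ?case by (rule r_combination_commutator_refl)
next
  case (R w)
  then have "N w * \<iota> (act (inv\<^bsub>W\<^esub> w) (\<lambda>x r. lin a x)) = \<iota> (\<lambda>x r. lin a x) * N w"
    by (simp add: R_relation act_rpoly rpoly_lin act_inv_cancel R_carrier)
  then show ?case by (simp add: twisted_commutator_def r_combination_0)
next
  case (mult w v)
  then show ?case
    by (simp add: twisted_commutator_mult r_combination_scalar rcpoly.rcconst r_combination_add
        r_combination_mult_N r_combination_N_mult)
qed

lemma twisted_commutator_coeffs:
  obtains G where "\<forall>w\<in>carrier W. \<forall>y. G w y \<in> rcpoly"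
    and "\<forall>w\<in>carrier W. twisted_commutator a w = (\<Sum>y\<in>carrier W. N y * \<iota> (G w y))"
    and "\<forall>y\<in>carrier W. G \<one>\<^bsub>W\<^esub> y = 0"
proof -
  have "\<forall>w\<in>carrier W. \<exists>G. (\<forall>y. G y \<in> rcpoly) \<and> twisted_commutator a w = (\<Sum>y\<in>carrier W. N y * \<iota> (G y))"
    using r_combination_commutator unfolding r_combination_def by blast
  then obtain G where G: "\<forall>w\<in>carrier W. \<forall>y. G w y \<in> rcpoly"
      and tc: "\<forall>w\<in>carrier W. twisted_commutator a w = (\<Sum>y\<in>carrier W. N y * \<iota> (G w y))"
    by metis
  have "(\<Sum>y\<in>carrier W. N y * \<iota> (G \<one>\<^bsub>W\<^esub> y)) = 0"
    using tc[rule_format, OF one_closed] by (simp add: twisted_commutator_def N_one act_one)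
  then have "\<forall>y\<in>carrier W. G \<one>\<^bsub>W\<^esub> y = 0"
    using G rcpoly_imp_rpoly by (intro hecke_coeffs_eq_0) auto
  then show ?thesis using G tc that by blast
qed

lemma iota_lin_commutator:
  fixes a :: "'n \<Rightarrow> complex"
  assumes w: "w \<in> carrier W" and g: "g \<in> rpoly"
  defines "L \<equiv> \<lambda>(x::'n \<Rightarrow> complex) (r::complex). lin a x"
  shows "\<iota> L * (N w * \<iota> g) - N w * \<iota> g * \<iota> L
    = N w * \<iota> ((act (inv\<^bsub>W\<^esub> w) L - L) * g) + twisted_commutator a w * \<iota> g"
proof -
  have L: "L \<in> rpoly" "act (inv\<^bsub>W\<^esub> w) L \<in> rpoly" unfolding L_def by (simp_all add: rpoly_lin act_rpoly)
  have "\<iota> ((act (inv\<^bsub>W\<^esub> w) L - L) * g) = \<iota> (act (inv\<^bsub>W\<^esub> w) L * g) - \<iota> (L * g)"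
    unfolding left_diff_distrib using L g by (intro iota_diff rpoly_mult)
  also have "\<dots> = \<iota> (act (inv\<^bsub>W\<^esub> w) L) * \<iota> g - \<iota> g * \<iota> L"
    using L g by (simp only: iota_mult iota_commute[OF L(1) g])
  finally have e1: "\<iota> ((act (inv\<^bsub>W\<^esub> w) L - L) * g) = \<iota> (act (inv\<^bsub>W\<^esub> w) L) * \<iota> g - \<iota> g * \<iota> L" .
  have e2: "\<iota> L * N w = N w * \<iota> (act (inv\<^bsub>W\<^esub> w) L) + twisted_commutator a w"
    unfolding twisted_commutator_def L_def by simp
  show ?thesis unfolding e1 mult.assoc[symmetric] e2 by (simp add: algebra_simps)
qed

lemma central_coeff_relation:
  assumes z: "z \<in> centre" and F: "\<forall>w\<in>carrier W. F w \<in> rpoly" and zF: "z = (\<Sum>w\<in>carrier W. N w * \<iota> (F w))"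
  shows "\<exists>G. (\<forall>w\<in>carrier W. \<forall>y. G w y \<in> rcpoly) \<and> (\<forall>y\<in>carrier W. G \<one>\<^bsub>W\<^esub> y = 0) \<and>
     (\<forall>y\<in>carrier W. (act (inv\<^bsub>W\<^esub> y) (\<lambda>x r. lin a x) - (\<lambda>x r. lin a x)) * F y
          + (\<Sum>w\<in>carrier W. G w y * F w) = 0)"
proof -
  define L where "L = (\<lambda>(x::'n \<Rightarrow> complex) (r::complex). lin a x)"
  obtain G where G: "\<forall>w\<in>carrier W. \<forall>y. G w y \<in> rcpoly"
      and tc: "\<forall>w\<in>carrier W. twisted_commutator a w = (\<Sum>y\<in>carrier W. N y * \<iota> (G w y))"
      and G1: "\<forall>y\<in>carrier W. G \<one>\<^bsub>W\<^esub> y = 0"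
    by (rule twisted_commutator_coeffs)
  have G': "\<forall>w\<in>carrier W. \<forall>y. G w y \<in> rpoly" using G rcpoly_imp_rpoly by blast
  define H where "H = (\<lambda>y. (act (inv\<^bsub>W\<^esub> y) L - L) * F y + (\<Sum>w\<in>carrier W. G w y * F w))"
  have GF: "(\<Sum>w\<in>carrier W. G w y * F w) \<in> rpoly" for y
    using F G' by (intro rpoly_sum ballI rpoly_mult) auto
  have AF: "(act (inv\<^bsub>W\<^esub> y) L - L) * F y \<in> rpoly" if "y \<in> carrier W" for y
    using F that unfolding L_def by (intro rpoly_mult rpoly_diff act_rpoly rpoly_lin) auto
  have summand: "\<iota> L * (N w * \<iota> (F w)) - N w * \<iota> (F w) * \<iota> L
      = N w * \<iota> ((act (inv\<^bsub>W\<^esub> w) L - L) * F w) + (\<Sum>y\<in>carrier W. N y * \<iota> (G w y * F w))"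
    if w: "w \<in> carrier W" for w
proof -
    have "twisted_commutator a w * \<iota> (F w) = (\<Sum>y\<in>carrier W. N y * \<iota> (G w y) * \<iota> (F w))"
      using tc w by (simp add: sum_distrib_right)
    also have "\<dots> = (\<Sum>y\<in>carrier W. N y * \<iota> (G w y * F w))"
      using G' F w by (intro sum.cong) (simp_all add: iota_mult mult.assoc)
    finally show ?thesis using iota_lin_commutator[OF w, of "F w" a] F w unfolding L_def by simp
  qed
  have "\<iota> L * z - z * \<iota> L = (\<Sum>w\<in>carrier W. \<iota> L * (N w * \<iota> (F w)) - N w * \<iota> (F w) * \<iota> L)"
    unfolding zF by (simp only: sum_distrib_left sum_distrib_right sum_subtractf)
  also have "\<dots> = (\<Sum>w\<in>carrier W. N w * \<iota> ((act (inv\<^bsub>W\<^esub> w) L - L) * F w))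
      + (\<Sum>w\<in>carrier W. \<Sum>y\<in>carrier W. N y * \<iota> (G w y * F w))"
    using summand by (simp add: sum.distrib)
  also have "(\<Sum>w\<in>carrier W. \<Sum>y\<in>carrier W. N y * \<iota> (G w y * F w))
      = (\<Sum>y\<in>carrier W. N y * \<iota> (\<Sum>w\<in>carrier W. G w y * F w))"
    using G' F by (subst sum.swap) (simp add: sum_distrib_left iota_sum rpoly_mult)
  also have "(\<Sum>w\<in>carrier W. N w * \<iota> ((act (inv\<^bsub>W\<^esub> w) L - L) * F w))
      + (\<Sum>y\<in>carrier W. N y * \<iota> (\<Sum>w\<in>carrier W. G w y * F w)) = (\<Sum>y\<in>carrier W. N y * \<iota> (H y))"
    unfolding H_def sum.distrib[symmetric] using AF GF
    by (intro sum.cong) (simp_all add: iota_add distrib_left)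
  finally have "\<forall>y\<in>carrier W. H y = 0"
    using z AF GF unfolding centre_def H_def by (intro hecke_coeffs_eq_0) (auto intro: rpoly_add)
  then show ?thesis using G G1 unfolding H_def L_def by blast
qed

text \<open>Evaluating the coefficient relation for \<open>\<xi> = x\<^sub>j\<close> along the line through \<open>0\<close> and \<open>x\<^sub>0\<close>,
  where \<open>j\<close> is a coordinate moved by \<open>y\<close>.\<close>
lemma central_coeff_line_relation:
  assumes z: "z \<in> centre" and F: "\<forall>w\<in>carrier W. F w \<in> rpoly" and zF: "z = (\<Sum>w\<in>carrier W. N w * \<iota> (F w))"
    and p: "\<forall>w\<in>carrier W. \<forall>t. F w (line (\<lambda>j. 0) x0 t) r0 = poly (p w) t"
    and y: "y \<in> carrier W" and moved: "mv (\<rho> y) x0 \<noteq> x0"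
  shows "\<exists>d k. d \<noteq> 0 \<and> k \<one>\<^bsub>W\<^esub> = 0 \<and>
    [:0, d:] * p y + (\<Sum>w\<in>carrier W. Polynomial.smult (k w) (p w)) = 0"
proof -
  obtain j where j: "mv (\<rho> y) x0 j \<noteq> x0 j" using moved by auto
  define a where "a = (\<lambda>k. if k = j then (1::complex) else 0)"
  obtain G where G: "\<forall>w\<in>carrier W. \<forall>y. G w y \<in> rcpoly" "\<forall>y\<in>carrier W. G \<one>\<^bsub>W\<^esub> y = 0"
      "\<forall>y\<in>carrier W. (act (inv\<^bsub>W\<^esub> y) (\<lambda>x r. lin a x) - (\<lambda>x r. lin a x)) * F y
          + (\<Sum>w\<in>carrier W. G w y * F w) = 0"
    using central_coeff_relation[OF z F zF] by blast
  define d where "d = mv (\<rho> y) x0 j - x0 j"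
  define k where "k = (\<lambda>w. G w y (\<lambda>j. 0) r0)"
  have "poly ([:0, d:] * p y + (\<Sum>w\<in>carrier W. Polynomial.smult (k w) (p w))) t = 0" for t
proof -
    define xt where "xt = line (\<lambda>j. 0) x0 t"
    have "mv (\<rho> y) xt = line (\<lambda>j. 0) (mv (\<rho> y) x0) t"
      unfolding xt_def mv_line by (simp add: mv_def)
    then have "act (inv\<^bsub>W\<^esub> y) (\<lambda>x r. lin a x) xt r0 - lin a xt = t * d"
      using y by (simp add: act_apply a_def d_def lin_indicator xt_def line_def right_diff_distrib)
    moreover have "G w y xt r0 = k w" if "w \<in> carrier W" for w
      unfolding k_def using rcpoly_indep_x G(1) that by blast
    moreover have "F w xt r0 = poly (p w) t" if "w \<in> carrier W" for w
      unfolding xt_def by (rule p[rule_format, OF that])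
    ultimately show ?thesis
      using fun_cong[OF fun_cong[OF G(3)[rule_format, OF y], of xt], of r0] y
      by (simp add: poly_linear_combination poly_sum sum_apply2 mult.assoc cong: sum.cong)
  qed
  then have "[:0, d:] * p y + (\<Sum>w\<in>carrier W. Polynomial.smult (k w) (p w)) = 0"
    using poly_all_0_iff_0 by blast
  moreover have "d \<noteq> 0" using j by (simp add: d_def)
  moreover have "k \<one>\<^bsub>W\<^esub> = 0" unfolding k_def using G(2) y by simp
  ultimately show ?thesis by blast
qed

lemma central_coeff_vanish_at_regular:
  assumes z: "z \<in> centre" and F: "\<forall>w\<in>carrier W. F w \<in> rpoly" and zF: "z = (\<Sum>w\<in>carrier W. N w * \<iota> (F w))"
    and x0: "\<forall>w\<in>carrier W. w \<noteq> \<one>\<^bsub>W\<^esub> \<longrightarrow> mv (\<rho> w) x0 \<noteq> x0"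
    and y: "y \<in> carrier W" "y \<noteq> \<one>\<^bsub>W\<^esub>"
  shows "F y x0 r0 = 0"
proof -
  define S where "S = carrier W - {\<one>\<^bsub>W\<^esub>}"
  have "\<forall>w\<in>carrier W. \<exists>p. \<forall>t. F w (line (\<lambda>j. 0) x0 t) r0 = poly p t"
    using F rpoly_poly_on_lines unfolding poly_on_lines_def by blast
  then obtain p where p: "\<forall>w\<in>carrier W. \<forall>t. F w (line (\<lambda>j. 0) x0 t) r0 = poly (p w) t" by metis
  have "\<exists>d k. d \<noteq> 0 \<and> [:0, d:] * p u + (\<Sum>w\<in>S. Polynomial.smult (k w) (p w)) = 0" if u: "u \<in> S" for u
proof -
    obtain d k where dk: "d \<noteq> 0" "k \<one>\<^bsub>W\<^esub> = 0"
        "[:0, d:] * p u + (\<Sum>w\<in>carrier W. Polynomial.smult (k w) (p w)) = 0"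
      using central_coeff_line_relation[OF z F zF p] x0 u unfolding S_def by blast
    have sum_S: "(\<Sum>w\<in>carrier W. Polynomial.smult (k w) (p w)) = (\<Sum>w\<in>S. Polynomial.smult (k w) (p w))"
      using fin dk(2) unfolding S_def by (simp add: sum.remove[of _ "\<one>\<^bsub>W\<^esub>"])
    have "[:0, d:] * p u + (\<Sum>w\<in>S. Polynomial.smult (k w) (p w)) = 0"
      by (subst sum_S[symmetric]) (rule dk(3))
    with dk(1) show ?thesis by (intro exI[of _ d] exI[of _ k] conjI)
  qed
  then have "\<exists>d. \<forall>u\<in>S. \<exists>k. d u \<noteq> 0 \<and> [:0, d u:] * p u + (\<Sum>w\<in>S. Polynomial.smult (k w) (p w)) = 0"
    by (intro bchoice) blast
  then obtain d where "\<forall>u\<in>S. \<exists>k. d u \<noteq> 0 \<and> [:0, d u:] * p u + (\<Sum>w\<in>S. Polynomial.smult (k w) (p w)) = 0" ..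
  then have "\<exists>k. \<forall>u\<in>S. d u \<noteq> 0 \<and> [:0, d u:] * p u + (\<Sum>w\<in>S. Polynomial.smult (k u w) (p w)) = 0"
    by (rule bchoice)
  then obtain k where d: "\<forall>u\<in>S. d u \<noteq> 0"
    and rel: "\<forall>u\<in>S. [:0, d u:] * p u + (\<Sum>w\<in>S. Polynomial.smult (k u w) (p w)) = 0"
    by blast
  have "finite S" unfolding S_def using fin by simp
  then have "\<forall>u\<in>S. p u = 0" using d rel by (rule polys_eq_0_if_degree_raising_relation)
  then have "F y (line (\<lambda>j. 0) x0 1) r0 = 0" using p y unfolding S_def by simp
  then show ?thesis by (simp add: line_def)
qed

text \<open>Faithfulness is used only here: each \<open>w \<noteq> 1\<close> moves some point, so the fixed-point sets
  are proper subspaces and a generic point avoids all of them.\<close>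
lemma ex_regular_point:
  assumes inj: "inj_on \<rho> (carrier W)" and g: "poly_on_lines g" "g y \<noteq> 0"
  shows "\<exists>x0. g x0 \<noteq> 0 \<and> (\<forall>w\<in>carrier W. w \<noteq> \<one>\<^bsub>W\<^esub> \<longrightarrow> mv (\<rho> w) x0 \<noteq> x0)"
proof -
  have "\<exists>j x. mv (\<rho> w) x j \<noteq> x j" if "w \<in> carrier W - {\<one>\<^bsub>W\<^esub>}" for w
  proof (rule ccontr)
    assume "\<not> (\<exists>j x. mv (\<rho> w) x j \<noteq> x j)"
    then have "\<rho> w = \<rho> \<one>\<^bsub>W\<^esub>" using mv_eq_idm rep_one by (metis ext)
    then show False using inj that unfolding inj_on_def by auto
  qed
  then obtain J where J: "\<forall>w\<in>carrier W - {\<one>\<^bsub>W\<^esub>}. \<exists>x. mv (\<rho> w) x (J w) \<noteq> x (J w)" by metis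
  define S where "S = insert g ((\<lambda>w x. mv (\<rho> w) x (J w) - x (J w)) ` (carrier W - {\<one>\<^bsub>W\<^esub>}))"
  have "\<exists>x. \<forall>h\<in>S. h x \<noteq> 0"
    using fin g J unfolding S_def by (intro poly_on_lines_common_nonzero) (auto simp: poly_on_lines_mv_coord)
  then obtain x0 where x0: "\<forall>h\<in>S. h x0 \<noteq> 0" by blast
  have "mv (\<rho> w) x0 \<noteq> x0" if "w \<in> carrier W" "w \<noteq> \<one>\<^bsub>W\<^esub>" for w
    using x0 that unfolding S_def by force
  then show ?thesis using x0 unfolding S_def by blast
qed

lemma central_in_invariants:
  assumes inj: "inj_on \<rho> (carrier W)" and z: "z \<in> centre"
  shows "z \<in> \<iota> ` inv_rpoly W \<rho>"
proof -
  obtain F where F: "\<forall>w\<in>carrier W. F w \<in> rpoly" and zF: "z = (\<Sum>w\<in>carrier W. N w * \<iota> (F w))"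
    using hecke_basis[of z] by blast
  have "F y = 0" if y: "y \<in> carrier W" "y \<noteq> \<one>\<^bsub>W\<^esub>" for y
  proof (rule ccontr)
    assume "F y \<noteq> 0"
    then obtain x1 r0 where "F y x1 r0 \<noteq> 0" by (metis ext zero_fun_apply)
    moreover have "poly_on_lines (\<lambda>x. F y x r0)" using F y rpoly_poly_on_lines by blast
    ultimately obtain x0 where "F y x0 r0 \<noteq> 0" "\<forall>w\<in>carrier W. w \<noteq> \<one>\<^bsub>W\<^esub> \<longrightarrow> mv (\<rho> w) x0 \<noteq> x0"
      using ex_regular_point[OF inj] by blast
    then show False using central_coeff_vanish_at_regular[OF z F zF _ y] by blast
  qed
  then have "z = \<iota> (F \<one>\<^bsub>W\<^esub>)"
    unfolding zF using fin by (simp add: sum.remove[of _ "\<one>\<^bsub>W\<^esub>"] iota_zero N_one)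
  moreover have "F \<one>\<^bsub>W\<^esub> \<in> inv_rpoly W \<rho>"
    using F z \<open>z = \<iota> (F \<one>\<^bsub>W\<^esub>)\<close> by (intro central_imp_invariant) auto
  ultimately show ?thesis by blast
qed

end



theorem lemma1p6:
  fixes W :: "'w monoid"
    and \<rho> :: "'w \<Rightarrow> 'n::finite \<Rightarrow> 'n \<Rightarrow> complex"
    and W0 R :: "'w set"
    and I :: "'i set"
    and \<alpha> :: "'i \<Rightarrow> 'n \<Rightarrow> complex"
    and hc :: "'i \<Rightarrow> 'n \<Rightarrow> complex"
    and s :: "'i \<Rightarrow> 'w"
    and c :: "'i \<Rightarrow> complex"
    and cocyc :: "'w \<Rightarrow> 'w \<Rightarrow> complex"
    and \<iota> :: "(('n \<Rightarrow> complex) \<Rightarrow> complex \<Rightarrow> complex) \<Rightarrow> 'h::ring_1"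
    and N :: "'w \<Rightarrow> 'h"
  assumes grp: "group W" and fin: "finite (carrier W)"
    \<comment> \<open>\<rho> : W \<rightarrow> GL(t) a representation\<close>
    and rep_hom: "\<forall>w\<in>carrier W. \<forall>v\<in>carrier W. \<rho> (w \<otimes>\<^bsub>W\<^esub> v) = mmul (\<rho> w) (\<rho> v)"
    and rep_one: "\<rho> \<one>\<^bsub>W\<^esub> = idm"
    \<comment> \<open>W = W^\<circ> \<rtimes> R\<close>
    and W0_normal: "W0 \<lhd> W" and R_sub: "subgroup R W"
    and W0_R_int: "W0 \<inter> R = {\<one>\<^bsub>W\<^esub>}" and W0_R_prod: "W0 <#>\<^bsub>W\<^esub> R = carrier W"
    \<comment> \<open>simple roots and simple reflections generating W^\<circ>\<close>
    and finI: "finite I"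
    and s_in: "\<forall>i\<in>I. s i \<in> W0"
    and W0_gen: "W0 = generate W (s ` I)"
    and alpha_nz: "\<forall>i\<in>I. \<alpha> i \<noteq> (\<lambda>j. 0)"
    and coroot: "\<forall>i\<in>I. lin (\<alpha> i) (hc i) = 2"
    and refl: "\<forall>i\<in>I. \<forall>x. mv (\<rho> (s i)) x = (\<lambda>j. x j - lin (\<alpha> i) x * hc i j)"
    \<comment> \<open>R stabilises the set of simple roots (R = stabiliser of P)\<close>
    and R_perm: "\<forall>r\<in>R. \<forall>i\<in>I. \<exists>k\<in>I. funct_act (\<rho> (inv\<^bsub>W\<^esub> r)) (\<alpha> i) = \<alpha> k
                                 \<and> s k = r \<otimes>\<^bsub>W\<^esub> s i \<otimes>\<^bsub>W\<^esub> inv\<^bsub>W\<^esub> r"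
    \<comment> \<open>parameters constant on W-conjugacy classes of simple reflections\<close>
    and c_conj: "\<forall>i\<in>I. \<forall>k\<in>I. (\<exists>w\<in>carrier W. s k = w \<otimes>\<^bsub>W\<^esub> s i \<otimes>\<^bsub>W\<^esub> inv\<^bsub>W\<^esub> w) \<longrightarrow> c i = c k"
    \<comment> \<open>\<natural>: a normalised C^\<times>-valued 2-cocycle on W/W^\<circ>, inflated to W\<close>
    and nat_nz: "\<forall>w\<in>carrier W. \<forall>v\<in>carrier W. cocyc w v \<noteq> 0"
    and nat_cocycle: "\<forall>u\<in>carrier W. \<forall>v\<in>carrier W. \<forall>w\<in>carrier W.
                        cocyc u v * cocyc (u \<otimes>\<^bsub>W\<^esub> v) w = cocyc v w * cocyc u (v \<otimes>\<^bsub>W\<^esub> w)"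
    and nat_norm: "cocyc \<one>\<^bsub>W\<^esub> \<one>\<^bsub>W\<^esub> = 1"
    and nat_cosets: "\<forall>u\<in>carrier W. \<forall>v\<in>carrier W. \<forall>a\<in>W0. \<forall>b\<in>W0.
                        cocyc (u \<otimes>\<^bsub>W\<^esub> a) (v \<otimes>\<^bsub>W\<^esub> b) = cocyc u v"
    \<comment> \<open>H is the graded Hecke algebra H(t, W, c r, \<natural>)\<close>
    and H: "is_graded_hecke W \<rho> R I \<alpha> s c cocyc \<iota> N"
  shows "(\<forall>f\<in>inv_rpoly W \<rho>. \<iota> f \<in> centre)
         \<and> (inj_on \<rho> (carrier W) \<longrightarrow> centre = \<iota> ` inv_rpoly W \<rho>)"
proof -
  \<comment> \<open>Only the defining relations of \<open>\<H>\<close> matter: \<open>W0 \<inter> R = {1}\<close>, the finiteness of \<open>I\<close>,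
    \<open>R_perm\<close>, \<open>c_conj\<close> and the cocycle identities are consistency conditions for their existence.\<close>
  have "graded_hecke W \<rho> W0 R I \<alpha> hc s c cocyc \<iota> N"
    unfolding graded_hecke_def graded_hecke_axioms_def
    using grp fin rep_hom rep_one normal_imp_subgroup[OF W0_normal] R_sub W0_R_prod s_in W0_gen
      alpha_nz coroot refl nat_nz H
    by blast
  then interpret graded_hecke W \<rho> W0 R I \<alpha> hc s c cocyc \<iota> N .
  show ?thesis using invariant_central central_in_invariants by blast
qed

end
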